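(* Let $M\cong\prec a_1,\ldots,a_m\succ$ be an integral lattice relative to a good BONG, $R_i=\operatorname{ord}(a_i)$. (i) $R_j\ge R_i\ge 0$ for all $i,j\in[1,m]^O$ with $j\ge i$, and $R_j\ge R_i\ge -2e$ for all $i,j\in[1,m]^E$ with $j\ge i$. (ii) If $R_j=0$ for some $j\in[1,m]^O$, then $R_i=0$ for all $i\in[1,j]^O$ and $R_i$ is even for all $1\le i\le j$. (iii) If $R_j=-2e$ for some $j\in[1,m]^E$, then for each $i\in[1,j]^E$ we have $R_{i-1}=0$, $R_i=-2e$ and $d(-a_{i-1}a_i)\ge d[-a_{i-1}a_i]\ge 2e$; consequently $d[(-1)^{j/2}a_{1,j}]\ge 2e$. (iv) If $R_j=-2e$ for some $j\in[1,m]^E$, then $[a_1,\ldots,a_j]\cong\mathbb H^{j/2}$ or $\mathbb H^{(j-2)/2}\perp[1,-\Delta]$. (v) If $R_j=-2e$ and $R_{j+1}$ is even for some $j\in[1,m]^E$ (with $j+1\le m$), then $[a_1,\ldots,a_{j+1}]\cong\mathbb H^{j/2}\perp[\varepsilon]$ for some $\varepsilon\in\mathcal O_F^\times$ with $\varepsilon\in a_{j+1}F^{\times2}\cup\Delta a_{j+1}F^{\times2}$.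
   Context: $F$ dyadic local field, $\mathcal O_F$, $\mathcal O_F^\times$, uniformizer $\pi$, valuation $\operatorname{ord}$, $e=\operatorname{ord}(2)$. $\mathfrak d(c)=\bigcap_{x\in F}(c-x^2)\mathcal O_F$, $d(c)=\operatorname{ord}(c^{-1}\mathfrak d(c))$ for $c\in F^\times$. $\Delta=1-4\rho$ with $\rho\in\mathcal O_F^\times$, $\mathfrak d(\Delta)=4\mathcal O_F$. $[a_1,\ldots,a_k]$ is the space with orthogonal basis of lengths $a_i$; $\mathbb H$ the hyperbolic plane. $[h,k]^E$ (resp. $[h,k]^O$) is the set of even (resp. odd) integers in $[h,k]$. A lattice is integral if $Q(M)\subseteq\mathcal O_F$. BONGs: $x_1,\ldots,x_m\in FM$ is a BONG of $M$ if $x_1\in M$ with $Q(x_1)\mathcal O_F=\mathfrak nM$ and $x_2,\ldots,x_m$ is a BONG of the projection of $M$ onto $(Fx_1)^\perp$; good if $\operatorname{ord}Q(x_i)\le\operatorname{ord}Q(x_{i+2})$. $M\cong\prec a_1,\ldots,a_m\succ$ means $Q(x_i)=a_i$. Write $a_{i,j}=a_i\cdots a_j$, $a_{i,i-1}=1$. For $1\le i\le m-1$, $\alpha_i=\min\{T_0,\ldots,T_{m-1}\}$ where $T_0=(R_{i+1}-R_i)/2+e$, $T_j=R_{i+1}-R_j+d(-a_ja_{j+1})$ for $1\le j\le i$, $T_j=R_{j+1}-R_i+d(-a_ja_{j+1})$ for $i\le j\le m-1$. For $c\in F^\times$ and $0\le i-1\le j\le m$, $d[ca_{i,j}]=\min\{d(ca_{i,j}),\alpha_{i-1},\alpha_j\}$,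 where $\alpha_0$ and $\alpha_m$ are omitted. *)

theory Defs
  imports Complex_Main "HOL-Library.Extended_Real"
begin

text \<open>A field F (a type) together with its normalized discrete valuation ord
(value at 0 is irrelevant, ord 0 plays the role of infinity and is never used).\<close>

definition val_ring :: "('a::field \<Rightarrow> int) \<Rightarrow> 'a set" where
  "val_ring ord = {x. x = 0 \<or> 0 \<le> ord x}"

definition val_units :: "('a::field \<Rightarrow> int) \<Rightarrow> 'a set" where
  "val_units ord = {x. x \<noteq> 0 \<and> ord x = 0}"

definition dyadic_local_field :: "('a::field \<Rightarrow> int) \<Rightarrow> bool" where
  "dyadic_local_field ord \<longleftrightarrow>
     (\<forall>x y. x \<noteq> 0 \<longrightarrow> y \<noteq> 0 \<longrightarrow> ord (x * y) = ord x + ord y) \<and>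
     (\<forall>x y. x \<noteq> 0 \<longrightarrow> y \<noteq> 0 \<longrightarrow> x + y \<noteq> 0 \<longrightarrow> min (ord x) (ord y) \<le> ord (x + y)) \<and>
     (\<exists>\<pi>. \<pi> \<noteq> 0 \<and> ord \<pi> = 1) \<and>
     (\<forall>X :: nat \<Rightarrow> 'a.
        (\<forall>k. \<exists>N. \<forall>n\<ge>N. \<forall>n'\<ge>N. X n = X n' \<or> k \<le> ord (X n - X n')) \<longrightarrow>
        (\<exists>L. \<forall>k. \<exists>N. \<forall>n\<ge>N. X n = L \<or> k \<le> ord (X n - L))) \<and>
     (\<exists>S. finite S \<and> S \<subseteq> val_ring ord \<and>
        (\<forall>x\<in>val_ring ord. \<exists>s\<in>S. x = s \<or> 1 \<le> ord (x - s))) \<and>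
     (2::'a) \<noteq> 0 \<and> 1 \<le> ord 2"

definition principal :: "('a::field \<Rightarrow> int) \<Rightarrow> 'a \<Rightarrow> 'a set" where
  "principal ord c = {c * y | y. y \<in> val_ring ord}"

text \<open>ord of a fractional ideal (infinity for the zero ideal)\<close>
definition ideal_ord :: "('a::field \<Rightarrow> int) \<Rightarrow> 'a set \<Rightarrow> ereal" where
  "ideal_ord ord I = Inf ((\<lambda>y. ereal (of_int (ord y))) ` (I - {0}))"

definition dfrak :: "('a::field \<Rightarrow> int) \<Rightarrow> 'a \<Rightarrow> 'a set" where
  "dfrak ord c = (\<Inter>x. principal ord (c - x\<^sup>2))"

definition dd :: "('a::field \<Rightarrow> int) \<Rightarrow> 'a \<Rightarrow> ereal" where
  "dd ord c = ideal_ord ord ((\<lambda>y. inverse c * y) ` dfrak ord c)"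

section \<open>Invariants alpha_i and d[ . ] of a sequence a_1, ..., a_m (1-indexed)\<close>

definition alpha :: "('a::field \<Rightarrow> int) \<Rightarrow> (nat \<Rightarrow> 'a) \<Rightarrow> nat \<Rightarrow> nat \<Rightarrow> ereal" where
  "alpha ord a m i = Inf
     ({ereal (of_int (ord (a (i+1)) - ord (a i)) / 2 + of_int (ord 2))}
      \<union> {ereal (of_int (ord (a (i+1)) - ord (a j))) + dd ord (- (a j * a (j+1))) | j. 1 \<le> j \<and> j \<le> i}
      \<union> {ereal (of_int (ord (a (j+1)) - ord (a i))) + dd ord (- (a j * a (j+1))) | j. i \<le> j \<and> j + 1 \<le> m})"

definition aprod :: "(nat \<Rightarrow> 'a::field) \<Rightarrow> nat \<Rightarrow> nat \<Rightarrow> 'a" where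
  "aprod a i j = (\<Prod>k\<in>{i..j}. a k)"

definition dbr :: "('a::field \<Rightarrow> int) \<Rightarrow> (nat \<Rightarrow> 'a) \<Rightarrow> nat \<Rightarrow> 'a \<Rightarrow> nat \<Rightarrow> nat \<Rightarrow> ereal" where
  "dbr ord a m c i j = min (dd ord (c * aprod a i j))
      (min (if 2 \<le> i then alpha ord a m (i - 1) else \<infinity>)
           (if j < m then alpha ord a m j else \<infinity>))"

text \<open>V is a vector space over F via scale; B is the symmetric bilinear form, Q(x) = B x x.\<close>

definition sym_bilinear :: "('a::field \<Rightarrow> 'v::ab_group_add \<Rightarrow> 'v) \<Rightarrow> ('v \<Rightarrow> 'v \<Rightarrow> 'a) \<Rightarrow> bool" where
  "sym_bilinear scale B \<longleftrightarrow> (\<forall>u v. B u v = B v u) \<and>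
     (\<forall>u v w. B (u + v) w = B u w + B v w) \<and> (\<forall>c u w. B (scale c u) w = c * B u w)"

definition nondegenerate_on :: "('v::zero \<Rightarrow> 'v \<Rightarrow> 'a::field) \<Rightarrow> 'v set \<Rightarrow> bool" where
  "nondegenerate_on B V \<longleftrightarrow> (\<forall>v\<in>V. (\<forall>w\<in>V. B v w = 0) \<longrightarrow> v = 0)"

definition Ospan :: "('a::field \<Rightarrow> int) \<Rightarrow> ('a \<Rightarrow> 'v::ab_group_add \<Rightarrow> 'v) \<Rightarrow> 'v set \<Rightarrow> 'v set" where
  "Ospan ord scale G = {\<Sum>k<n. scale (c k) (v k) | (n::nat) c v. \<forall>k<n. c k \<in> val_ring ord \<and> v k \<in> G}"

text \<open>a lattice: a finitely generated O_F-submodule (it is a lattice on its span FM)\<close>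
definition is_lattice :: "('a::field \<Rightarrow> int) \<Rightarrow> ('a \<Rightarrow> 'v::ab_group_add \<Rightarrow> 'v) \<Rightarrow> 'v set \<Rightarrow> bool" where
  "is_lattice ord scale M \<longleftrightarrow> (\<exists>G. finite G \<and> M = Ospan ord scale G)"

definition norm_ideal :: "('a::field \<Rightarrow> int) \<Rightarrow> ('v \<Rightarrow> 'v \<Rightarrow> 'a) \<Rightarrow> 'v set \<Rightarrow> 'a set" where
  "norm_ideal ord B M = {\<Sum>k<n. c k * B (v k) (v k) | (n::nat) c v. \<forall>k<n. c k \<in> val_ring ord \<and> v k \<in> M}"

definition proj :: "('a::field \<Rightarrow> 'v::ab_group_add \<Rightarrow> 'v) \<Rightarrow> ('v \<Rightarrow> 'v \<Rightarrow> 'a) \<Rightarrow> 'v \<Rightarrow> 'v \<Rightarrow> 'v" where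
  "proj scale B x v = v - scale (B v x / B x x) x"

fun is_BONG :: "('a::field \<Rightarrow> int) \<Rightarrow> ('a \<Rightarrow> 'v::ab_group_add \<Rightarrow> 'v) \<Rightarrow> ('v \<Rightarrow> 'v \<Rightarrow> 'a)
                 \<Rightarrow> 'v list \<Rightarrow> 'v set \<Rightarrow> bool" where
  "is_BONG ord scale B [] M \<longleftrightarrow> M = {0}"
| "is_BONG ord scale B (x # xs) M \<longleftrightarrow>
     x \<in> M \<and> B x x \<noteq> 0 \<and> principal ord (B x x) = norm_ideal ord B M \<and>
     is_BONG ord scale B xs (proj scale B x ` M)"

definition good_BONG :: "('a::field \<Rightarrow> int) \<Rightarrow> ('v \<Rightarrow> 'v \<Rightarrow> 'a) \<Rightarrow> 'v list \<Rightarrow> bool" where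
  "good_BONG ord B xs \<longleftrightarrow>
     (\<forall>i. i + 2 < length xs \<longrightarrow> ord (B (xs!i) (xs!i)) \<le> ord (B (xs!(i+2)) (xs!(i+2))))"

section \<open>Quadratic spaces in coordinates (Gram matrices, indices 0..n-1) and isometry\<close>

definition gram_iso :: "nat \<Rightarrow> (nat \<Rightarrow> nat \<Rightarrow> 'a::field) \<Rightarrow> (nat \<Rightarrow> nat \<Rightarrow> 'a) \<Rightarrow> bool" where
  "gram_iso n G H \<longleftrightarrow> (\<exists>P Pinv.
     (\<forall>k<n. \<forall>l<n. (\<Sum>i<n. P k i * Pinv i l) = (if k = l then 1 else 0)) \<and>
     (\<forall>k<n. \<forall>l<n. (\<Sum>i<n. Pinv k i * P i l) = (if k = l then 1 else 0)) \<and>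
     (\<forall>k<n. \<forall>l<n. (\<Sum>i<n. \<Sum>j<n. P i k * G i j * P j l) = H k l))"

definition diagm :: "(nat \<Rightarrow> 'a::field) \<Rightarrow> nat \<Rightarrow> nat \<Rightarrow> 'a" where
  "diagm d i j = (if i = j then d i else 0)"

text \<open>Gram matrix of H^k (hyperbolic planes with Gram matrix [[0,1],[1,0]])\<close>
definition hyp_gram :: "nat \<Rightarrow> nat \<Rightarrow> nat \<Rightarrow> 'a::field" where
  "hyp_gram k i j = (if i < 2*k \<and> j < 2*k \<and> i \<noteq> j \<and> i div 2 = j div 2 then 1 else 0)"

definition osum :: "nat \<Rightarrow> (nat \<Rightarrow> nat \<Rightarrow> 'a::field) \<Rightarrow> (nat \<Rightarrow> nat \<Rightarrow> 'a) \<Rightarrow> nat \<Rightarrow> nat \<Rightarrow> 'a" where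
  "osum n G H i j = (if i < n \<and> j < n then G i j
                     else if n \<le> i \<and> n \<le> j then H (i - n) (j - n) else 0)"

end

theory Submission
  imports Defs
begin

text \<open>
  For consecutive vectors of a BONG, the lattice vector \<open>v\<close> projecting onto \<open>x\<^sub>i\<^sub>+\<^sub>1\<close> has
  \<open>2B(v, x\<^sub>i)/Q(x\<^sub>i)\<close> integral.  This gives \<open>R\<^sub>i\<^sub>+\<^sub>1 \<ge> R\<^sub>i - 2e\<close> and exhibits
  \<open>-a\<^sub>ia\<^sub>i\<^sub>+\<^sub>1\<close> as a square up to a factor \<open>1 + O(\<pi>\<^bsup>R\<^sub>i \<^sub>- \<^sub>R\<^sub>i\<^sub>+\<^sub>1\<^esup>)\<close>, i.e.
  \<open>d(-a\<^sub>ia\<^sub>i\<^sub>+\<^sub>1) \<ge> R\<^sub>i - R\<^sub>i\<^sub>+\<^sub>1\<close>.  Together with goodness \<open>R\<^sub>i \<le> R\<^sub>i\<^sub>+\<^sub>2\<close> and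
  \<open>R\<^sub>1 \<ge> 0\<close> this yields (i), and the parity forced by an approximate square yields (ii).

  If \<open>R\<^sub>j = -2e\<close>, all these inequalities are equalities on the prefix, so every
  \<open>-a\<^sub>2\<^sub>t\<^sub>-\<^sub>1a\<^sub>2\<^sub>t\<close> is a square modulo \<open>4\<close>, which gives (iii).  By Hensel's lemma for
  \<open>x\<^sup>2 + x\<close> and the fact that its image has index 2 in the residue field, such an element lies in
  \<open>F\<^sup>\<times>\<^sup>2 \<union> \<Delta>F\<^sup>\<times>\<^sup>2\<close>, so each binary block is \<open>\<bbbH>\<close> or \<open>[1, -\<Delta>]\<close>.  Since every unit
  is a norm from \<open>F(\<surd>\<Delta>)\<close>, \<open>[1, -\<Delta>] \<perp> [1, -\<Delta>] \<cong> \<bbbH> \<perp> \<bbbH>\<close> and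
  \<open>[1, -\<Delta>] \<perp> [c] \<cong> \<bbbH> \<perp> [\<Delta>/c]\<close>, which gives (iv) and (v).
\<close>

section \<open>Valuations on a dyadic field\<close>

definition val_ge :: "('a::field \<Rightarrow> int) \<Rightarrow> 'a \<Rightarrow> int \<Rightarrow> bool" where
  "val_ge ord x k \<longleftrightarrow> x = 0 \<or> k \<le> ord x"

locale dyadic_field =
  fixes ord :: "'a::field \<Rightarrow> int"
  assumes dyadic: "dyadic_local_field ord"
begin

abbreviation int_ring :: "'a set" ("\<O>") where "\<O> \<equiv> val_ring ord"

lemma ord_mult: "x \<noteq> 0 \<Longrightarrow> y \<noteq> 0 \<Longrightarrow> ord (x * y) = ord x + ord y"
  using dyadic unfolding dyadic_local_field_def by blast

lemma ord_add_ge_min: "x \<noteq> 0 \<Longrightarrow> y \<noteq> 0 \<Longrightarrow> x + y \<noteq> 0 \<Longrightarrow> min (ord x) (ord y) \<le> ord (x + y)"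
  using dyadic unfolding dyadic_local_field_def by blast

lemma two_neq_zero: "(2::'a) \<noteq> 0"
  using dyadic unfolding dyadic_local_field_def by blast

lemma ord_two_ge_1: "1 \<le> ord 2"
  using dyadic unfolding dyadic_local_field_def by blast

lemma ord_1 [simp]: "ord 1 = 0"
  using ord_mult[of 1 1] by simp

lemma ord_inverse: "x \<noteq> 0 \<Longrightarrow> ord (inverse x) = - ord x"
  using ord_mult[of x "inverse x"] by simp

lemma ord_divide: "x \<noteq> 0 \<Longrightarrow> y \<noteq> 0 \<Longrightarrow> ord (x / y) = ord x - ord y"
  by (simp add: divide_inverse ord_mult ord_inverse)

lemma ord_uminus [simp]: "ord (- x) = ord x"
proof (cases "x = 0")
  case False
  have "ord (-1) = 0" using ord_mult[of "-1" "-1"] by simp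
  then show ?thesis using False ord_mult[of "-1" x] by simp
qed simp

lemma ord_power: "x \<noteq> 0 \<Longrightarrow> ord (x ^ n) = int n * ord x"
  by (induction n) (simp_all add: ord_mult distrib_right)

lemma ord_square: "x \<noteq> 0 \<Longrightarrow> ord (x\<^sup>2) = 2 * ord x"
  using ord_power[of x 2] by simp

lemma four_neq_zero: "(4::'a) \<noteq> 0"
  using two_neq_zero mult_eq_0_iff[of "2::'a" 2] by simp

lemma ord_four: "ord (4::'a) = 2 * ord 2"
  using ord_mult[OF two_neq_zero two_neq_zero] by simp

lemma exists_ord_eq: "\<exists>t. t \<noteq> 0 \<and> ord t = n"
proof -
  obtain p where p: "p \<noteq> 0" "ord p = 1"
    using dyadic unfolding dyadic_local_field_def by blast
  show ?thesis
  proof (cases "0 \<le> n")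
    case True
    then show ?thesis using p by (intro exI[of _ "p ^ nat n"]) (simp add: ord_power)
  next
    case False
    then show ?thesis using p
      by (intro exI[of _ "inverse p ^ nat (- n)"]) (simp add: ord_power ord_inverse)
  qed
qed

lemma val_ge_0 [simp]: "val_ge ord 0 k"
  by (simp add: val_ge_def)

lemma val_ge_mono: "val_ge ord x k \<Longrightarrow> l \<le> k \<Longrightarrow> val_ge ord x l"
  by (auto simp: val_ge_def)

lemma val_ge_uminus [simp]: "val_ge ord (- x) k \<longleftrightarrow> val_ge ord x k"
  by (simp add: val_ge_def)

lemma val_ge_1_iff: "val_ge ord 1 k \<longleftrightarrow> k \<le> 0"
  by (simp add: val_ge_def)

lemma val_ge_add: "val_ge ord x k \<Longrightarrow> val_ge ord y k \<Longrightarrow> val_ge ord (x + y) k"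
  using ord_add_ge_min[of x y] by (cases "x = 0 \<or> y = 0 \<or> x + y = 0") (auto simp: val_ge_def)

lemma val_ge_diff: "val_ge ord x k \<Longrightarrow> val_ge ord y k \<Longrightarrow> val_ge ord (x - y) k"
  using val_ge_add[of x k "- y"] by simp

lemma val_ge_mult: "val_ge ord x k \<Longrightarrow> val_ge ord y l \<Longrightarrow> val_ge ord (x * y) (k + l)"
  by (cases "x = 0"; cases "y = 0") (auto simp: val_ge_def ord_mult)

lemma val_ge_divide_iff: "y \<noteq> 0 \<Longrightarrow> val_ge ord (x / y) k \<longleftrightarrow> val_ge ord x (k + ord y)"
  by (cases "x = 0") (auto simp: val_ge_def ord_divide)

lemma val_ge_mult_iff: "y \<noteq> 0 \<Longrightarrow> val_ge ord (x * y) k \<longleftrightarrow> val_ge ord x (k - ord y)"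
  by (cases "x = 0") (auto simp: val_ge_def ord_mult)

lemma val_ge_square_iff: "val_ge ord (x\<^sup>2) (2 * k) \<longleftrightarrow> val_ge ord x k"
  by (cases "x = 0") (auto simp: val_ge_def ord_square)

lemma val_ge_1_of_square: "val_ge ord (x\<^sup>2) 1 \<Longrightarrow> val_ge ord x 1"
  by (cases "x = 0") (auto simp: val_ge_def ord_square)

lemma val_ge_two: "val_ge ord 2 1"
  using ord_two_ge_1 by (simp add: val_ge_def)

lemma zero_if_val_ge_all: "(\<And>k. val_ge ord x k) \<Longrightarrow> x = 0"
  using val_ge_def[of ord x "ord x + 1"] by simp

lemma ord_add_eq: "x \<noteq> 0 \<Longrightarrow> val_ge ord y (ord x + 1) \<Longrightarrow> x + y \<noteq> 0 \<and> ord (x + y) = ord x"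
proof (cases "y = 0")
  case False
  assume x: "x \<noteq> 0" and y: "val_ge ord y (ord x + 1)"
  then have less: "ord x < ord y" using False by (simp add: val_ge_def)
  have nz: "x + y \<noteq> 0"
  proof
    assume "x + y = 0"
    then have "y = - x" by (simp add: add_eq_0_iff2)
    then show False using less by simp
  qed
  have "min (ord x) (ord y) \<le> ord (x + y)" using ord_add_ge_min[OF x False nz] .
  moreover have "min (ord (x + y)) (ord (- y)) \<le> ord x"
    using ord_add_ge_min[of "x + y" "- y"] nz False x by simp
  ultimately show ?thesis using nz less by auto
qed simp

lemma one_plus_unit: "val_ge ord s 1 \<Longrightarrow> 1 + s \<noteq> 0 \<and> ord (1 + s) = 0"
  using ord_add_eq[of 1 s] by simp

lemma one_minus_unit: "val_ge ord s 1 \<Longrightarrow> 1 - s \<noteq> 0 \<and> ord (1 - s) = 0"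
  using one_plus_unit[of "- s"] by simp

lemma val_ring_iff [simp]: "x \<in> \<O> \<longleftrightarrow> val_ge ord x 0"
  by (simp add: val_ring_def val_ge_def)

lemma int_ring_add: "x \<in> \<O> \<Longrightarrow> y \<in> \<O> \<Longrightarrow> x + y \<in> \<O>"
  using val_ge_add by simp

lemma int_ring_diff: "x \<in> \<O> \<Longrightarrow> y \<in> \<O> \<Longrightarrow> x - y \<in> \<O>"
  using val_ge_diff by simp

lemma int_ring_mult: "x \<in> \<O> \<Longrightarrow> y \<in> \<O> \<Longrightarrow> x * y \<in> \<O>"
  using val_ge_mult[of x 0 y 0] by simp

lemma int_ring_1: "1 \<in> \<O>"
  by (simp add: val_ge_1_iff)

lemma principal_iff: "c \<noteq> 0 \<Longrightarrow> z \<in> principal ord c \<longleftrightarrow> val_ge ord (z / c) 0"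
proof
  assume c: "c \<noteq> 0" and "z \<in> principal ord c"
  then obtain y where "z = c * y" "val_ge ord y 0" unfolding principal_def by auto
  then show "val_ge ord (z / c) 0" using c by simp
next
  assume c: "c \<noteq> 0" and "val_ge ord (z / c) 0"
  moreover have "z = c * (z / c)" using c by simp
  ultimately show "z \<in> principal ord c" unfolding principal_def by force
qed

lemma dd_ge:
  assumes c: "c \<noteq> 0" and approx: "val_ge ord ((c - b\<^sup>2) / c) k"
  shows "ereal (of_int k) \<le> dd ord c"
  unfolding dd_def ideal_ord_def
proof (rule Inf_greatest)
  fix z assume "z \<in> (\<lambda>y. ereal (of_int (ord y))) ` ((\<lambda>y. inverse c * y) ` dfrak ord c - {0})"
  then obtain u where u: "u \<in> dfrak ord c" "inverse c * u \<noteq> 0"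
    and z: "z = ereal (of_int (ord (inverse c * u)))"
    by blast
  have u_in: "u \<in> principal ord (c - b\<^sup>2)" using u(1) unfolding dfrak_def by blast
  show "ereal (of_int k) \<le> z"
  proof (cases "c - b\<^sup>2 = 0")
    case True
    then show ?thesis using u_in u(2) unfolding principal_def by simp
  next
    case False
    then have "val_ge ord (u / (c - b\<^sup>2) * ((c - b\<^sup>2) / c)) (0 + k)"
      using u_in principal_iff val_ge_mult approx by blast
    moreover have "u / (c - b\<^sup>2) * ((c - b\<^sup>2) / c) = inverse c * u"
      using False c by (simp add: field_simps)
    ultimately have "val_ge ord (inverse c * u) k" by simp
    then show ?thesis using u(2) z by (simp add: val_ge_def)
  qed
qed

lemma dd_nonneg: "c \<noteq> 0 \<Longrightarrow> 0 \<le> dd ord c"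
  using dd_ge[of c 0 0] by (simp add: val_ge_1_iff zero_ereal_def)

end

section \<open>Hensel's lemma for \<open>x\<^sup>2 + x = w\<close>\<close>

context dyadic_field
begin


lemma cauchy_converges:
  fixes X :: "nat \<Rightarrow> 'a"
  assumes "\<And>k. \<exists>N. \<forall>n\<ge>N. \<forall>n'\<ge>N. val_ge ord (X n - X n') k"
  shows "\<exists>L. \<forall>k. \<exists>N. \<forall>n\<ge>N. val_ge ord (X n - L) k"
proof -
  have complete: "\<forall>X :: nat \<Rightarrow> 'a.
        (\<forall>k. \<exists>N. \<forall>n\<ge>N. \<forall>n'\<ge>N. X n = X n' \<or> k \<le> ord (X n - X n')) \<longrightarrow>
        (\<exists>L. \<forall>k. \<exists>N. \<forall>n\<ge>N. X n = L \<or> k \<le> ord (X n - L))"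
    using dyadic unfolding dyadic_local_field_def by (elim conjE)
  show ?thesis
    using complete[rule_format, of X] assms unfolding val_ge_def by simp
qed

definition as_newton :: "'a \<Rightarrow> 'a \<Rightarrow> 'a" where
  "as_newton w x = x - (x\<^sup>2 + x - w) / (2 * x + 1)"

text \<open>The derivative \<open>2x + 1\<close> is a unit, so each Newton step squares the error.\<close>

lemma as_newton_step:
  assumes x: "val_ge ord x 0" and f: "val_ge ord (x\<^sup>2 + x - w) k" and k: "1 \<le> k"
  shows "val_ge ord (as_newton w x) 0 \<and> val_ge ord ((as_newton w x)\<^sup>2 + as_newton w x - w) (2 * k)
         \<and> val_ge ord (as_newton w x - x) k"
proof -
  have "val_ge ord (2 * x) (1 + 0)" using val_ge_mult[OF val_ge_two x] .
  then have u: "1 + 2 * x \<noteq> 0" "ord (1 + 2 * x) = 0" using one_plus_unit by auto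
  define \<delta> where "\<delta> = (x\<^sup>2 + x - w) / (2 * x + 1)"
  have d: "val_ge ord \<delta> k" using f u unfolding \<delta>_def by (simp add: val_ge_divide_iff add.commute)
  have fd: "\<delta> * (2 * x + 1) = x\<^sup>2 + x - w" using u unfolding \<delta>_def by (simp add: add.commute)
  have "(x - \<delta>)\<^sup>2 + (x - \<delta>) - w = (x\<^sup>2 + x - w) - \<delta> * (2 * x + 1) + \<delta>\<^sup>2"
    by (simp add: power2_eq_square algebra_simps)
  then have "(x - \<delta>)\<^sup>2 + (x - \<delta>) - w = \<delta>\<^sup>2" using fd by simp
  moreover have "val_ge ord (\<delta>\<^sup>2) (2 * k)" using d val_ge_square_iff by blast
  moreover have "val_ge ord (x - \<delta>) 0" using val_ge_diff[OF x val_ge_mono[OF d]] k by simp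
  ultimately show ?thesis using d unfolding as_newton_def \<delta>_def[symmetric] by simp
qed

lemma as_hensel:
  assumes w: "val_ge ord w 0" and x0: "val_ge ord x0 0" and f0: "val_ge ord (x0\<^sup>2 + x0 - w) 1"
  shows "\<exists>x. val_ge ord x 0 \<and> x\<^sup>2 + x = w"
proof -
  define X where "X n = (as_newton w ^^ n) x0" for n
  have X_Suc: "X (Suc n) = as_newton w (X n)" for n unfolding X_def by simp
  have X_approx: "val_ge ord (X n) 0 \<and> val_ge ord ((X n)\<^sup>2 + X n - w) (int n + 1)" for n
  proof (induction n)
    case 0 then show ?case using x0 f0 by (simp add: X_def)
  next
    case (Suc n)
    then show ?case
      using as_newton_step[of "X n" w "int n + 1"] X_Suc val_ge_mono[of _ "2 * (int n + 1)"] by simp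
  qed
  have X_step: "val_ge ord (X (Suc n) - X n) (int n + 1)" for n
    using as_newton_step[of "X n" w "int n + 1"] X_approx[of n] X_Suc by simp
  have X_tail: "val_ge ord (X (n + d) - X n) (int n + 1)" for n d
  proof (induction d)
    case (Suc d)
    have "val_ge ord (X (Suc (n + d)) - X (n + d)) (int n + 1)"
      using X_step[of "n + d"] val_ge_mono by fastforce
    then have "val_ge ord ((X (Suc (n + d)) - X (n + d)) + (X (n + d) - X n)) (int n + 1)"
      using Suc val_ge_add by blast
    then show ?case by simp
  qed simp
  have "val_ge ord (X n - X n') k" if "n \<ge> nat k" "n' \<ge> nat k" for n n' k
  proof (cases "n \<le> n'")
    case True
    then obtain d where "n' = n + d" using le_Suc_ex by blast
    then show ?thesis
      using X_tail[of n d] that val_ge_mono val_ge_uminus[of "X n' - X n"] by fastforce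
  next
    case False
    then obtain d where "n = n' + d" using le_Suc_ex[of n' n] by auto
    then show ?thesis using X_tail[of n' d] that val_ge_mono by fastforce
  qed
  then obtain L where L: "\<And>k. \<exists>N. \<forall>n\<ge>N. val_ge ord (X n - L) k"
    using cauchy_converges[of X] by blast
  obtain N0 where "\<forall>n\<ge>N0. val_ge ord (X n - L) 0" using L by blast
  then have "val_ge ord (X N0 - (X N0 - L)) 0" using X_approx[of N0] val_ge_diff by blast
  then have L0: "val_ge ord L 0" by simp
  have "val_ge ord (L\<^sup>2 + L - w) k" for k
  proof -
    obtain N where N: "\<forall>n\<ge>N. val_ge ord (X n - L) k" using L by blast
    define n where "n = max N (nat k)"
    have "val_ge ord ((X n)\<^sup>2 + X n - w) k" using X_approx[of n] n_def val_ge_mono by fastforce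
    moreover have "val_ge ord (L + X n + 1) 0"
      using L0 X_approx[of n] val_ge_add val_ge_1_iff by simp
    then have "val_ge ord ((X n - L) * (L + X n + 1)) (k + 0)"
      using val_ge_mult N n_def by (metis max.cobounded1)
    ultimately have "val_ge ord (((X n)\<^sup>2 + X n - w) - ((X n - L) * (L + X n + 1))) k"
      using val_ge_diff by simp
    moreover have "((X n)\<^sup>2 + X n - w) - ((X n - L) * (L + X n + 1)) = L\<^sup>2 + L - w"
      by (simp add: power2_eq_square algebra_simps)
    ultimately show ?thesis by simp
  qed
  then have "L\<^sup>2 + L = w" using zero_if_val_ge_all[of "L\<^sup>2 + L - w"] by simp
  then show ?thesis using L0 by blast
qed

end

section \<open>The residue field and the map \<open>x \<mapsto> x\<^sup>2 + x\<close>\<close>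

context dyadic_field
begin

definition cong_pi :: "'a \<Rightarrow> 'a \<Rightarrow> bool" where
  "cong_pi x y \<longleftrightarrow> val_ge ord (x - y) 1"

definition residue :: "'a \<Rightarrow> 'a set" where
  "residue x = {y \<in> \<O>. cong_pi x y}"

definition residue_rep :: "'a set \<Rightarrow> 'a" where
  "residue_rep A = (SOME x. x \<in> A)"

lemma cong_pi_refl [simp]: "cong_pi x x"
  by (simp add: cong_pi_def)

lemma cong_pi_sym: "cong_pi x y \<Longrightarrow> cong_pi y x"
  unfolding cong_pi_def using val_ge_uminus[of "x - y" 1] by simp

lemma cong_pi_trans: "cong_pi x y \<Longrightarrow> cong_pi y z \<Longrightarrow> cong_pi x z"
  unfolding cong_pi_def using val_ge_add[of "x - y" 1 "y - z"] by simp

lemma residue_eq_iff: "x \<in> \<O> \<Longrightarrow> y \<in> \<O> \<Longrightarrow> residue x = residue y \<longleftrightarrow> cong_pi x y"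
proof
  assume "y \<in> \<O>" "residue x = residue y"
  then have "y \<in> residue x" by (simp add: residue_def)
  then show "cong_pi x y" by (simp add: residue_def)
next
  assume "cong_pi x y"
  then show "residue x = residue y"
    unfolding residue_def using cong_pi_trans[of x y] cong_pi_trans[of y x] cong_pi_sym by blast
qed

lemma residue_rep: "x \<in> \<O> \<Longrightarrow> residue_rep (residue x) \<in> \<O> \<and> cong_pi x (residue_rep (residue x))"
proof -
  assume "x \<in> \<O>"
  then have "x \<in> residue x" by (simp add: residue_def)
  then have "residue_rep (residue x) \<in> residue x" unfolding residue_rep_def by (rule someI)
  then show ?thesis by (simp add: residue_def)
qed

lemma finite_residue_field: "finite (residue ` \<O>)"
proof -
  obtain S where S: "finite S" "S \<subseteq> \<O>" "\<forall>x\<in>\<O>. \<exists>s\<in>S. x = s \<or> 1 \<le> ord (x - s)"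
    using dyadic unfolding dyadic_local_field_def by (elim conjE) blast
  have "residue ` \<O> \<subseteq> residue ` S"
  proof
    fix A assume "A \<in> residue ` \<O>"
    then obtain x where x: "x \<in> \<O>" "A = residue x" by blast
    then obtain s where s: "s \<in> S" "x = s \<or> 1 \<le> ord (x - s)" using S(3) by blast
    then have "cong_pi x s" unfolding cong_pi_def val_ge_def by auto
    moreover have "s \<in> \<O>" using s S(2) by blast
    ultimately have "A = residue s" using x residue_eq_iff[of x s] by simp
    then show "A \<in> residue ` S" using s by blast
  qed
  then show ?thesis using S(1) finite_subset by blast
qed

text \<open>An injective self-map of the finite residue field is onto.\<close>

lemma residue_map_surj:
  assumes f_int: "\<And>x. x \<in> \<O> \<Longrightarrow> f x \<in> \<O>"
    and f_cong: "\<And>x y. x \<in> \<O> \<Longrightarrow> y \<in> \<O> \<Longrightarrow> cong_pi x y \<Longrightarrow> cong_pi (f x) (f y)"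
    and f_inj: "\<And>x y. x \<in> \<O> \<Longrightarrow> y \<in> \<O> \<Longrightarrow> cong_pi (f x) (f y) \<Longrightarrow> cong_pi x y"
    and y: "y \<in> \<O>"
  shows "\<exists>x\<in>\<O>. cong_pi (f x) y"
proof -
  define h where "h A = residue (f (residue_rep A))" for A
  have h_residue: "h (residue x) = residue (f x)" if x: "x \<in> \<O>" for x
  proof -
    have r: "residue_rep (residue x) \<in> \<O>" "cong_pi x (residue_rep (residue x))"
      using residue_rep[OF x] by auto
    have "cong_pi (f (residue_rep (residue x))) (f x)"
      by (rule f_cong[OF r(1) x cong_pi_sym[OF r(2)]])
    then show ?thesis unfolding h_def using residue_eq_iff[OF f_int[OF r(1)] f_int[OF x]] by simp
  qed
  have "inj_on h (residue ` \<O>)"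
  proof (rule inj_onI)
    fix A B assume "A \<in> residue ` \<O>" "B \<in> residue ` \<O>" "h A = h B"
    then obtain a b where ab: "a \<in> \<O>" "b \<in> \<O>" "A = residue a" "B = residue b"
      "residue (f a) = residue (f b)"
      using h_residue by auto
    then have "cong_pi (f a) (f b)" using residue_eq_iff[OF f_int[OF ab(1)] f_int[OF ab(2)]] by simp
    then have "cong_pi a b" using f_inj ab by blast
    then show "A = B" using ab residue_eq_iff by simp
  qed
  moreover have "h ` (residue ` \<O>) \<subseteq> residue ` \<O>"
  proof
    fix A assume "A \<in> h ` residue ` \<O>"
    then obtain x where "x \<in> \<O>" "A = h (residue x)" by blast
    then have "A = residue (f x)" "f x \<in> \<O>" using h_residue f_int by simp_all
    then show "A \<in> residue ` \<O>" by blast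
  qed
  ultimately have surj: "h ` (residue ` \<O>) = residue ` \<O>"
    by (intro endo_inj_surj finite_residue_field)
  have "residue y \<in> h ` residue ` \<O>" using y surj by simp
  then obtain x where x: "x \<in> \<O>" "residue y = h (residue x)" by blast
  then have "cong_pi y (f x)" using h_residue residue_eq_iff[OF y f_int[OF x(1)]] by simp
  then show ?thesis using x(1) cong_pi_sym by blast
qed

lemma square_residue_surj: "y \<in> \<O> \<Longrightarrow> \<exists>x\<in>\<O>. cong_pi (x\<^sup>2) y"
proof (rule residue_map_surj)
  fix x assume "x \<in> \<O>"
  then show "x\<^sup>2 \<in> \<O>" using int_ring_mult[of x x] by (simp add: power2_eq_square)
next
  fix x y assume xy: "x \<in> \<O>" "y \<in> \<O>" "cong_pi x y"
  then have "val_ge ord ((x - y) * (x + y)) (1 + 0)"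
    using val_ge_mult[of "x - y" 1 "x + y" 0] val_ge_add unfolding cong_pi_def by simp
  moreover have "(x - y) * (x + y) = x\<^sup>2 - y\<^sup>2" by (simp add: power2_eq_square algebra_simps)
  ultimately show "cong_pi (x\<^sup>2) (y\<^sup>2)" unfolding cong_pi_def by simp
next
  fix x y assume xy: "x \<in> \<O>" "y \<in> \<O>" "cong_pi (x\<^sup>2) (y\<^sup>2)"
  have "val_ge ord (x - y) 0" using xy val_ge_diff by simp
  then have "val_ge ord (2 * y * (x - y)) (1 + 0 + 0)"
    using xy by (intro val_ge_mult val_ge_two) simp_all
  then have "val_ge ord ((x\<^sup>2 - y\<^sup>2) - 2 * y * (x - y)) 1"
    using xy val_ge_diff unfolding cong_pi_def by simp
  moreover have "(x\<^sup>2 - y\<^sup>2) - 2 * y * (x - y) = (x - y)\<^sup>2"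
    by (simp add: power2_eq_square algebra_simps)
  ultimately show "cong_pi x y" unfolding cong_pi_def using val_ge_1_of_square by simp
qed

definition as_poly :: "'a \<Rightarrow> 'a" where
  "as_poly x = x\<^sup>2 + x"

definition as_solvable :: "'a \<Rightarrow> bool" where
  "as_solvable w \<longleftrightarrow> (\<exists>x\<in>\<O>. cong_pi (as_poly x) w)"

lemma as_poly_int_ring: "x \<in> \<O> \<Longrightarrow> as_poly x \<in> \<O>"
  unfolding as_poly_def power2_eq_square using int_ring_add int_ring_mult by blast

lemma val_ge_two_mult: "x \<in> \<O> \<Longrightarrow> val_ge ord (2 * x) 1"
  using val_ge_mult[OF val_ge_two, of x 0] by simp

lemma as_poly_diff: "as_poly y - as_poly x = (y - x) * (y + x + 1)"
  by (simp add: as_poly_def power2_eq_square algebra_simps)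

lemma as_poly_cong: "x \<in> \<O> \<Longrightarrow> y \<in> \<O> \<Longrightarrow> cong_pi x y \<Longrightarrow> cong_pi (as_poly x) (as_poly y)"
  using val_ge_mult[of "x - y" 1 "x + y + 1" 0] int_ring_add int_ring_1
  unfolding cong_pi_def as_poly_diff by simp

lemma as_poly_fibre:
  assumes x: "x \<in> \<O>" and y: "y \<in> \<O>" and c: "cong_pi (as_poly y) (as_poly x)"
  shows "cong_pi y x \<or> cong_pi y (x + 1)"
proof -
  have "y - x \<in> \<O>" "y + x + 1 \<in> \<O>" using x y int_ring_add int_ring_diff int_ring_1 by auto
  moreover have "val_ge ord ((y - x) * (y + x + 1)) 1" using c unfolding cong_pi_def as_poly_diff .
  ultimately have "val_ge ord (y - x) 1 \<or> val_ge ord (y + x + 1) 1"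
    by (cases "y - x = 0"; cases "y + x + 1 = 0") (auto simp: val_ge_def ord_mult)
  moreover have "val_ge ord (y - (x + 1)) 1" if "val_ge ord (y + x + 1) 1"
  proof -
    have "val_ge ord ((y + x + 1) - 2 * (x + 1)) 1"
      using that val_ge_diff val_ge_two_mult x int_ring_add int_ring_1 by blast
    moreover have "(y + x + 1) - 2 * (x + 1) = y - (x + 1)" by (simp add: algebra_simps)
    ultimately show ?thesis by metis
  qed
  ultimately show ?thesis unfolding cong_pi_def by blast
qed

lemma not_cong_pi_succ: "\<not> cong_pi x (x + 1)"
  unfolding cong_pi_def by (simp add: val_ge_def)

text \<open>Additivity of \<open>as_poly\<close> modulo \<open>\<pi>\<close>: the cross term \<open>2xy\<close> vanishes in characteristic 2.\<close>

lemma as_poly_cong_diff: "x \<in> \<O> \<Longrightarrow> y \<in> \<O> \<Longrightarrow> cong_pi (as_poly y - as_poly x) (as_poly (y - x))"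
proof -
  assume xy: "x \<in> \<O>" "y \<in> \<O>"
  have "(as_poly y - as_poly x) - as_poly (y - x) = 2 * (x * (y - x))"
    by (simp add: as_poly_def power2_eq_square algebra_simps)
  then show ?thesis unfolding cong_pi_def using val_ge_two_mult xy int_ring_mult int_ring_diff by metis
qed

definition residue_as :: "'a set \<Rightarrow> 'a set" where
  "residue_as A = residue (as_poly (residue_rep A))"

lemma residue_as_residue: "x \<in> \<O> \<Longrightarrow> residue_as (residue x) = residue (as_poly x)"
proof -
  assume x: "x \<in> \<O>"
  then have "residue_rep (residue x) \<in> \<O>" "cong_pi x (residue_rep (residue x))"
    using residue_rep by auto
  then have "cong_pi (as_poly (residue_rep (residue x))) (as_poly x)"
    using as_poly_cong x cong_pi_sym by blast
  then show ?thesis unfolding residue_as_def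
    using x residue_eq_iff as_poly_int_ring \<open>residue_rep (residue x) \<in> \<O>\<close> by simp
qed

lemma residue_as_fibre:
  assumes x: "x \<in> \<O>"
  shows "{A \<in> residue ` \<O>. residue_as A = residue (as_poly x)} = {residue x, residue (x + 1)}"
proof
  show "{A \<in> residue ` \<O>. residue_as A = residue (as_poly x)} \<subseteq> {residue x, residue (x + 1)}"
  proof
    fix A assume "A \<in> {A \<in> residue ` \<O>. residue_as A = residue (as_poly x)}"
    then obtain y where y: "y \<in> \<O>" "A = residue y" "residue (as_poly y) = residue (as_poly x)"
      using residue_as_residue by auto
    then have "cong_pi y x \<or> cong_pi y (x + 1)"
      using as_poly_fibre x y(1) residue_eq_iff as_poly_int_ring by simp
    then show "A \<in> {residue x, residue (x + 1)}"
      using y residue_eq_iff x int_ring_add int_ring_1 by blast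
  qed
next
  have x1: "x + 1 \<in> \<O>" using x int_ring_add int_ring_1 by blast
  have "as_poly (x + 1) - as_poly x = 2 * (x + 1)"
    by (simp add: as_poly_def power2_eq_square algebra_simps)
  then have "cong_pi (as_poly (x + 1)) (as_poly x)"
    unfolding cong_pi_def using val_ge_two_mult[OF x1] by simp
  then have "residue_as (residue (x + 1)) = residue (as_poly x)"
    using residue_as_residue x1 residue_eq_iff as_poly_int_ring x by simp
  then show "{residue x, residue (x + 1)} \<subseteq> {A \<in> residue ` \<O>. residue_as A = residue (as_poly x)}"
    using x x1 residue_as_residue by auto
qed

text \<open>Every fibre of \<open>x \<mapsto> x\<^sup>2 + x\<close> on the residue field has exactly two points.\<close>

lemma card_residue_field: "card (residue ` \<O>) = 2 * card (residue_as ` residue ` \<O>)"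
proof -
  let ?C = "residue ` \<O>" and ?I = "residue_as ` residue ` \<O>"
  define fibre where "fibre B = {A \<in> ?C. residue_as A = B}" for B
  have fibre_card: "card (fibre B) = 2" if "B \<in> ?I" for B
  proof -
    obtain x where x: "x \<in> \<O>" "B = residue (as_poly x)"
      using \<open>B \<in> ?I\<close> residue_as_residue by auto
    have "residue x \<noteq> residue (x + 1)"
      using residue_eq_iff x(1) int_ring_add int_ring_1 not_cong_pi_succ by blast
    then show ?thesis unfolding fibre_def x(2) residue_as_fibre[OF x(1)] by simp
  qed
  have "card ?C = card (\<Union> (fibre ` ?I))"
    by (rule arg_cong[where f = card]) (auto simp: fibre_def)
  also have "\<dots> = (\<Sum>B\<in>?I. card (fibre B))"
    by (rule card_UN_disjoint) (auto simp: fibre_def finite_residue_field)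
  also have "\<dots> = (\<Sum>B\<in>?I. 2)" using fibre_card by simp
  finally show ?thesis by simp
qed

text \<open>The image of \<open>x \<mapsto> x\<^sup>2 + x\<close> is a subgroup of index 2 of the residue field.\<close>

lemma as_solvable_diff:
  assumes w: "w \<in> \<O>" and c: "c \<in> \<O>" and nw: "\<not> as_solvable w" and nc: "\<not> as_solvable c"
  shows "as_solvable (w - c)"
proof -
  let ?C = "residue ` \<O>" and ?I = "residue_as ` residue ` \<O>"
  define \<tau> where "\<tau> A = residue (c + residue_rep A)" for A
  have tc: "\<tau> (residue x) = residue (c + x)" if "x \<in> \<O>" for x
  proof -
    have r: "residue_rep (residue x) \<in> \<O>" "cong_pi x (residue_rep (residue x))"
      using residue_rep[OF that] by auto
    then have "cong_pi (c + x) (c + residue_rep (residue x))" unfolding cong_pi_def by simp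
    then show ?thesis
      unfolding \<tau>_def using residue_eq_iff[OF int_ring_add[OF c that] int_ring_add[OF c r(1)]] by simp
  qed
  have IC: "?I \<subseteq> ?C" using residue_as_residue as_poly_int_ring by auto
  have fin: "finite ?C" by (rule finite_residue_field)
  have inj: "inj_on \<tau> ?C"
  proof (rule inj_onI)
    fix A B assume AB: "A \<in> ?C" "B \<in> ?C" "\<tau> A = \<tau> B"
    then obtain a b where ab0: "a \<in> \<O>" "b \<in> \<O>" "A = residue a" "B = residue b" by blast
    then have "residue (c + a) = residue (c + b)" using tc AB(3) by simp
    then have "cong_pi (c + a) (c + b)"
      using residue_eq_iff[OF int_ring_add[OF c ab0(1)] int_ring_add[OF c ab0(2)]] by simp
    then have "cong_pi a b" unfolding cong_pi_def by simp
    then show "A = B" using ab0 residue_eq_iff[of a b] by simp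
  qed
  have sub: "\<tau> ` ?I \<subseteq> ?C - ?I"
  proof
    fix A assume "A \<in> \<tau> ` ?I"
    then obtain x where x0: "x \<in> \<O>" "A = \<tau> (residue_as (residue x))" by blast
    then have x: "x \<in> \<O>" "A = residue (c + as_poly x)" using residue_as_residue tc as_poly_int_ring by simp_all
    have AC: "A \<in> ?C" using x int_ring_add[OF c as_poly_int_ring[OF x(1)]] by blast
    have "A \<notin> ?I"
    proof
      assume "A \<in> ?I"
      then obtain y where y0: "y \<in> \<O>" "A = residue_as (residue y)" by blast
      then have y: "y \<in> \<O>" "A = residue (as_poly y)" using residue_as_residue by simp_all
      then have "residue (c + as_poly x) = residue (as_poly y)" using x by simp
      then have "cong_pi (c + as_poly x) (as_poly y)"
        using residue_eq_iff[OF int_ring_add[OF c as_poly_int_ring[OF x(1)]] as_poly_int_ring[OF y(1)]]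
        by simp
      then have "cong_pi (as_poly y - as_poly x) c" unfolding cong_pi_def using val_ge_uminus[of "c + as_poly x - as_poly y" 1]
        by (simp add: algebra_simps)
      then have "cong_pi (as_poly (y - x)) c"
        using cong_pi_trans[OF cong_pi_sym[OF as_poly_cong_diff[OF x(1) y(1)]]] by blast
      then show False using nc y(1) x(1) int_ring_diff unfolding as_solvable_def by blast
    qed
    then show "A \<in> ?C - ?I" using AC by blast
  qed
  have "inj_on \<tau> ?I" using inj_on_subset[OF inj IC] .
  then have "card (\<tau> ` ?I) = card ?I" by (rule card_image)
  moreover have "card (?C - ?I) = card ?C - card ?I" using card_Diff_subset[OF finite_subset[OF IC fin] IC] .
  moreover have "card ?C = 2 * card ?I" by (rule card_residue_field)
  ultimately have "card (\<tau> ` ?I) = card (?C - ?I)" by linarith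
  then have tI: "\<tau> ` ?I = ?C - ?I" by (rule card_subset_eq[OF finite_Diff[OF fin] sub])
  have "residue w \<notin> ?I"
  proof
    assume "residue w \<in> ?I"
    then obtain y where y0: "y \<in> \<O>" "residue w = residue_as (residue y)" by blast
    then have "residue w = residue (as_poly y)" using residue_as_residue by simp
    then have "cong_pi w (as_poly y)" using residue_eq_iff[OF w as_poly_int_ring[OF y0(1)]] by simp
    then have "cong_pi (as_poly y) w" by (rule cong_pi_sym)
    then show False using nw y0(1) unfolding as_solvable_def by blast
  qed
  then have "residue w \<in> ?C - ?I" using w by blast
  then have "residue w \<in> \<tau> ` ?I" using tI by simp
  then obtain x where x0: "x \<in> \<O>" "residue w = \<tau> (residue_as (residue x))" by blast
  then have "residue w = residue (c + as_poly x)" using residue_as_residue tc as_poly_int_ring by simp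
  then have "cong_pi w (c + as_poly x)"
    using residue_eq_iff[OF w int_ring_add[OF c as_poly_int_ring[OF x0(1)]]] by simp
  then have "cong_pi (as_poly x) (w - c)" unfolding cong_pi_def using val_ge_uminus[of "w - (c + as_poly x)" 1]
    by (simp add: algebra_simps)
  then show ?thesis unfolding as_solvable_def using x0(1) by blast
qed

end

section \<open>Square classes of units congruent to 1 modulo 4\<close>

locale dyadic_field_Delta = dyadic_field +
  fixes \<rho> \<Delta> :: 'a
  assumes rho_unit: "\<rho> \<noteq> 0" "ord \<rho> = 0"
    and Delta_eq: "\<Delta> = 1 - 4 * \<rho>"
    and dfrak_Delta: "dfrak ord \<Delta> = principal ord 4"
begin

lemma rho_int_ring: "\<rho> \<in> \<O>"
  using rho_unit by (simp add: val_ge_def)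

lemma val_ge_four_mult: "x \<in> \<O> \<Longrightarrow> val_ge ord (4 * x) 1"
proof -
  assume "x \<in> \<O>"
  then have "val_ge ord (4 * x) (2 * ord 2 + 0)"
    using val_ge_mult[of 4 "2 * ord 2" x 0] ord_four by (simp add: val_ge_def)
  moreover have "1 \<le> 2 * ord 2 + 0" using ord_two_ge_1 by simp
  ultimately show ?thesis by (rule val_ge_mono)
qed

lemma Delta_unit: "\<Delta> \<noteq> 0 \<and> ord \<Delta> = 0"
  using one_minus_unit[OF val_ge_four_mult[OF rho_int_ring]] Delta_eq by simp

text \<open>\<open>\<frakd>(\<Delta>) = 4\<O> \<noteq> 0\<close>, whereas \<open>\<frakd>(y\<^sup>2) = 0\<close>.\<close>

lemma Delta_not_square: "\<Delta> \<noteq> y\<^sup>2"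
proof
  assume "\<Delta> = y\<^sup>2"
  moreover have "(4::'a) \<in> principal ord 4"
    unfolding principal_def by (rule CollectI, rule exI[of _ 1]) (simp add: val_ge_1_iff)
  then have "(4::'a) \<in> principal ord (\<Delta> - y\<^sup>2)" using dfrak_Delta unfolding dfrak_def by blast
  ultimately show False using four_neq_zero unfolding principal_def by simp
qed

lemma square_one_plus_two_mult: "(1 + 2 * z)\<^sup>2 = 1 + 4 * (z\<^sup>2 + z :: 'a)"
  by (simp add: power2_eq_square algebra_simps)

lemma one_plus_two_mult_neq_zero: "z \<in> \<O> \<Longrightarrow> 1 + 2 * z \<noteq> 0"
  using one_plus_unit[OF val_ge_two_mult] by blast

lemma as_root:
  assumes "w \<in> \<O>" and "as_solvable w"
  shows "\<exists>z\<in>\<O>. z\<^sup>2 + z = w"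
proof -
  obtain x where "val_ge ord x 0" "val_ge ord (x\<^sup>2 + x - w) 1"
    using assms unfolding as_solvable_def cong_pi_def as_poly_def by auto
  then obtain z where "val_ge ord z 0" "z\<^sup>2 + z = w" using as_hensel assms(1) by auto
  then show ?thesis by auto
qed

lemma not_as_solvable_neg_rho: "\<not> as_solvable (- \<rho>)"
proof
  assume "as_solvable (- \<rho>)"
  moreover have "- \<rho> \<in> \<O>" using rho_int_ring by simp
  ultimately obtain z where z: "z \<in> \<O>" "z\<^sup>2 + z = - \<rho>" using as_root by blast
  then have "\<Delta> = (1 + 2 * z)\<^sup>2" unfolding square_one_plus_two_mult z(2) Delta_eq by simp
  then show False using Delta_not_square by blast
qed

text \<open>The square classes of units \<open>\<equiv> 1 (mod 4)\<close> are those of \<open>1\<close> and \<open>\<Delta>\<close>: if \<open>w\<close> is not of the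
  form \<open>z\<^sup>2 + z\<close> modulo \<open>\<pi>\<close>, then \<open>w + \<rho>\<close> is, because the image of \<open>z\<^sup>2 + z\<close> has index 2.\<close>

lemma one_plus_four_mult_square_class:
  assumes w: "w \<in> \<O>"
  shows "\<exists>t. t \<noteq> 0 \<and> (1 + 4 * w = t\<^sup>2 \<or> 1 + 4 * w = \<Delta> * t\<^sup>2)"
proof (cases "as_solvable w")
  case True
  then obtain z where z: "z \<in> \<O>" "z\<^sup>2 + z = w" using as_root w by blast
  then have "1 + 4 * w = (1 + 2 * z)\<^sup>2" unfolding square_one_plus_two_mult by simp
  then show ?thesis using one_plus_two_mult_neq_zero[OF z(1)] by blast
next
  case False
  then have "as_solvable (w + \<rho>)"
    using as_solvable_diff[OF w _ False not_as_solvable_neg_rho] rho_int_ring by simp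
  define w' where "w' = (w + \<rho>) / \<Delta>"
  have wr: "w + \<rho> \<in> \<O>" using w rho_int_ring int_ring_add by blast
  have w'_int: "w' \<in> \<O>" unfolding w'_def using wr Delta_unit by (simp add: val_ge_divide_iff)
  have "w' - (w + \<rho>) = (w + \<rho>) * (1 - \<Delta>) / \<Delta>"
    unfolding w'_def using Delta_unit by (simp add: field_simps)
  then have "w' - (w + \<rho>) = (w + \<rho>) * (4 * \<rho>) / \<Delta>" using Delta_eq by simp
  moreover have "val_ge ord ((w + \<rho>) * (4 * \<rho>)) 1"
    using val_ge_mult[of "w + \<rho>" 0 "4 * \<rho>" 1] wr val_ge_four_mult[OF rho_int_ring] by simp
  ultimately have "cong_pi w' (w + \<rho>)" unfolding cong_pi_def using Delta_unit
    by (simp add: val_ge_divide_iff)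
  then have "as_solvable w'"
    using \<open>as_solvable (w + \<rho>)\<close> cong_pi_trans cong_pi_sym unfolding as_solvable_def by blast
  then obtain z where z: "z \<in> \<O>" "z\<^sup>2 + z = w'" using as_root w'_int by blast
  have "\<Delta> * (1 + 4 * w') = \<Delta> + 4 * (w + \<rho>)"
    unfolding w'_def using Delta_unit by (simp add: field_simps)
  also have "\<dots> = 1 + 4 * w" using Delta_eq by (simp add: algebra_simps)
  finally have "1 + 4 * w = \<Delta> * (1 + 2 * z)\<^sup>2"
    unfolding square_one_plus_two_mult z(2) by simp
  then show ?thesis using one_plus_two_mult_neq_zero[OF z(1)] by blast
qed

text \<open>Every unit is a norm from the unramified quadratic extension \<open>F(\<surd>\<Delta>)\<close>: write \<open>c \<equiv> \<rho> b\<^sup>2\<close>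
  modulo \<open>\<pi>\<close> and solve \<open>a\<^sup>2 + ab + \<rho>b\<^sup>2 = c\<close> for \<open>a\<close> by Hensel's lemma.\<close>

lemma norm_form_surj:
  assumes c: "c \<noteq> 0" "ord c = 0"
  shows "\<exists>x y. x\<^sup>2 - \<Delta> * y\<^sup>2 = c"
proof -
  have cr: "c / \<rho> \<noteq> 0" "ord (c / \<rho>) = 0" using c rho_unit by (simp_all add: ord_divide)
  obtain b where b: "b \<in> \<O>" "cong_pi (b\<^sup>2) (c / \<rho>)"
    using square_residue_surj[of "c / \<rho>"] cr by (auto simp: val_ge_def)
  have "val_ge ord (b\<^sup>2 - c / \<rho>) (ord (c / \<rho>) + 1)" using b(2) cr unfolding cong_pi_def by simp
  then have "b\<^sup>2 \<noteq> 0 \<and> ord (b\<^sup>2) = 0" using ord_add_eq[OF cr(1)] cr by fastforce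
  then have b2: "b\<^sup>2 \<noteq> 0" "ord (b\<^sup>2) = 0" by auto
  define w where "w = c / b\<^sup>2 - \<rho>"
  have "w = - \<rho> * (b\<^sup>2 - c / \<rho>) / b\<^sup>2" unfolding w_def using b2 rho_unit by (simp add: field_simps)
  moreover have "val_ge ord (- \<rho> * (b\<^sup>2 - c / \<rho>)) (0 + 1)"
    using val_ge_mult[of "- \<rho>" 0 "b\<^sup>2 - c / \<rho>" 1] rho_int_ring b(2) unfolding cong_pi_def by simp
  ultimately have w1: "val_ge ord w 1" using b2 by (simp add: val_ge_divide_iff)
  then obtain t where t: "t\<^sup>2 + t = w" using as_hensel[of w 0] val_ge_mono[OF w1] by auto
  define a where "a = b * t"
  have "a\<^sup>2 + a * b + \<rho> * b\<^sup>2 = b\<^sup>2 * (t\<^sup>2 + t + \<rho>)"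
    unfolding a_def by (simp add: power2_eq_square algebra_simps)
  also have "\<dots> = c" using t b2 unfolding w_def by (simp add: field_simps)
  finally have "a\<^sup>2 + a * b + \<rho> * b\<^sup>2 = c" .
  moreover have "(a + b / 2)\<^sup>2 - \<Delta> * (b / 2)\<^sup>2 = a\<^sup>2 + a * b + \<rho> * b\<^sup>2"
  proof -
    have "(16::'a) = 4 * 4" by simp
    then have "(16::'a) \<noteq> 0" using no_zero_divisors[OF four_neq_zero four_neq_zero] by argo
    then show ?thesis using two_neq_zero four_neq_zero unfolding Delta_eq
      by (simp add: power2_eq_square field_simps)
  qed
  ultimately show ?thesis by blast
qed

end

context dyadic_field
begin

text \<open>\<open>c \<noteq> 0\<close> with \<open>d(c) \<ge> 2e\<close>, witnessed by a single approximating square.\<close>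

definition square_mod_four :: "'a \<Rightarrow> bool" where
  "square_mod_four c \<longleftrightarrow> c \<noteq> 0 \<and> (\<exists>\<beta>. val_ge ord ((c - \<beta>\<^sup>2) / c) (2 * ord 2))"

lemma square_mod_four_mult:
  assumes "square_mod_four c1" and "square_mod_four c2"
  shows "square_mod_four (c1 * c2)"
proof -
  obtain b1 b2 where c: "c1 \<noteq> 0" "c2 \<noteq> 0"
    and h1: "val_ge ord ((c1 - b1\<^sup>2) / c1) (2 * ord 2)" and h2: "val_ge ord ((c2 - b2\<^sup>2) / c2) (2 * ord 2)"
    using assms unfolding square_mod_four_def by blast
  define s1 where "s1 = (c1 - b1\<^sup>2) / c1"
  define s2 where "s2 = (c2 - b2\<^sup>2) / c2"
  have "b1\<^sup>2 = c1 * (1 - s1)" "b2\<^sup>2 = c2 * (1 - s2)"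
    unfolding s1_def s2_def using c by (simp_all add: field_simps)
  then have "(c1 * c2 - (b1 * b2)\<^sup>2) / (c1 * c2) = (c1 * c2 - c1 * (1 - s1) * (c2 * (1 - s2))) / (c1 * c2)"
    by (simp add: power_mult_distrib)
  also have "\<dots> = s1 + s2 - s1 * s2" using c by (simp add: field_simps)
  finally have "(c1 * c2 - (b1 * b2)\<^sup>2) / (c1 * c2) = s1 + s2 - s1 * s2" .
  moreover have "val_ge ord (s1 * s2) (2 * ord 2)"
    using val_ge_mult[of s1 "2 * ord 2" s2 "2 * ord 2"] h1 h2 ord_two_ge_1 val_ge_mono
    unfolding s1_def s2_def by fastforce
  ultimately have "val_ge ord ((c1 * c2 - (b1 * b2)\<^sup>2) / (c1 * c2)) (2 * ord 2)"
    using val_ge_diff[OF val_ge_add] h1 h2 unfolding s1_def s2_def by simp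
  then show ?thesis unfolding square_mod_four_def using c by auto
qed

lemma even_ord_of_approx_square:
  assumes c: "c \<noteq> 0" and approx: "val_ge ord ((c - \<beta>\<^sup>2) / c) k" and k: "1 \<le> k"
  shows "even (ord c)"
proof -
  define s where "s = (c - \<beta>\<^sup>2) / c"
  have "val_ge ord s 1" using approx k val_ge_mono unfolding s_def by blast
  then have s: "1 - s \<noteq> 0" "ord (1 - s) = 0" using one_minus_unit by auto
  have "\<beta>\<^sup>2 = c * (1 - s)" unfolding s_def using c by (simp add: field_simps)
  then have "\<beta> \<noteq> 0" "ord (\<beta>\<^sup>2) = ord c" using c s by (auto simp: ord_mult)
  then have "ord c = 2 * ord \<beta>" by (simp add: ord_square)
  then show ?thesis by simp
qed

end

context dyadic_field_Delta
begin

lemma square_class_of_square_mod_four: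
  assumes "square_mod_four c"
  shows "\<exists>t. t \<noteq> 0 \<and> (c = t\<^sup>2 \<or> c = \<Delta> * t\<^sup>2)"
proof -
  obtain \<beta> where c: "c \<noteq> 0" and approx: "val_ge ord ((c - \<beta>\<^sup>2) / c) (2 * ord 2)"
    using assms unfolding square_mod_four_def by blast
  define s where "s = (c - \<beta>\<^sup>2) / c"
  have s2: "val_ge ord s (2 * ord 2)" using approx unfolding s_def .
  then have "val_ge ord s 1" using ord_two_ge_1 val_ge_mono by fastforce
  then have u: "1 - s \<noteq> 0" "ord (1 - s) = 0" using one_minus_unit by auto
  have b2: "\<beta>\<^sup>2 = c * (1 - s)" unfolding s_def using c by (simp add: field_simps)
  then have \<beta>: "\<beta> \<noteq> 0" using c u by auto
  define w where "w = s / (4 * (1 - s))"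
  have "ord (4 * (1 - s)) = ord 4 + ord (1 - s)" by (rule ord_mult[OF four_neq_zero u(1)])
  then have "ord (4 * (1 - s)) = 2 * ord 2" using ord_four u(2) by simp
  then have w: "w \<in> \<O>" unfolding w_def using s2 u four_neq_zero by (simp add: val_ge_divide_iff)
  have cw: "c = \<beta>\<^sup>2 * (1 + 4 * w)" unfolding w_def b2 using u four_neq_zero by (simp add: field_simps)
  obtain t where t: "t \<noteq> 0" "1 + 4 * w = t\<^sup>2 \<or> 1 + 4 * w = \<Delta> * t\<^sup>2"
    using one_plus_four_mult_square_class[OF w] by blast
  then have "c = (\<beta> * t)\<^sup>2 \<or> c = \<Delta> * (\<beta> * t)\<^sup>2" using cw by (auto simp: power_mult_distrib)
  then show ?thesis using \<beta> t(1) by (intro exI[of _ "\<beta> * t"]) simp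
qed

end

section \<open>Isometry of Gram matrices\<close>

definition id_mat :: "nat \<Rightarrow> nat \<Rightarrow> 'a::field" where
  "id_mat i k = (if i = k then 1 else 0)"

definition mat_mult :: "nat \<Rightarrow> (nat \<Rightarrow> nat \<Rightarrow> 'a::field) \<Rightarrow> (nat \<Rightarrow> nat \<Rightarrow> 'a) \<Rightarrow> nat \<Rightarrow> nat \<Rightarrow> 'a" where
  "mat_mult n A B i k = (\<Sum>r<n. A i r * B r k)"

definition congr_mat :: "nat \<Rightarrow> (nat \<Rightarrow> nat \<Rightarrow> 'a::field) \<Rightarrow> (nat \<Rightarrow> nat \<Rightarrow> 'a) \<Rightarrow> nat \<Rightarrow> nat \<Rightarrow> 'a" where
  "congr_mat n P G k l = (\<Sum>i<n. \<Sum>j<n. P i k * G i j * P j l)"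

lemma delta_mult: "(if P then 1 else 0) * (x::'a::field) = (if P then x else 0)"
  by simp

lemma mult_delta: "(x::'a::field) * (if P then 1 else 0) = (if P then x else 0)"
  by simp

lemma gram_iso_iff: "gram_iso n G H \<longleftrightarrow> (\<exists>P Q.
     (\<forall>k<n. \<forall>l<n. mat_mult n P Q k l = id_mat k l) \<and> (\<forall>k<n. \<forall>l<n. mat_mult n Q P k l = id_mat k l) \<and>
     (\<forall>k<n. \<forall>l<n. congr_mat n P G k l = H k l))"
  unfolding gram_iso_def mat_mult_def congr_mat_def id_mat_def by simp

lemma gram_isoI:
  assumes "\<And>k l. k < n \<Longrightarrow> l < n \<Longrightarrow> mat_mult n P Q k l = id_mat k l"
    and "\<And>k l. k < n \<Longrightarrow> l < n \<Longrightarrow> mat_mult n Q P k l = id_mat k l"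
    and "\<And>k l. k < n \<Longrightarrow> l < n \<Longrightarrow> congr_mat n P G k l = H k l"
  shows "gram_iso n G H"
  unfolding gram_iso_iff using assms by blast

lemma gram_iso_cong:
  assumes iso: "gram_iso n G H"
    and G: "\<And>i j. i < n \<Longrightarrow> j < n \<Longrightarrow> G i j = G' i j"
    and H: "\<And>i j. i < n \<Longrightarrow> j < n \<Longrightarrow> H i j = H' i j"
  shows "gram_iso n G' H'"
proof -
  from iso obtain P Q where PQ: "\<forall>k<n. \<forall>l<n. mat_mult n P Q k l = id_mat k l"
    "\<forall>k<n. \<forall>l<n. mat_mult n Q P k l = id_mat k l" "\<forall>k<n. \<forall>l<n. congr_mat n P G k l = H k l"
    unfolding gram_iso_iff by blast
  have "congr_mat n P G' k l = congr_mat n P G k l" for k l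
    unfolding congr_mat_def using G by (intro sum.cong refl) auto
  then show ?thesis using PQ H by (intro gram_isoI) auto
qed

lemma gram_iso_refl: "gram_iso n G G"
  by (rule gram_isoI[where P = id_mat and Q = id_mat])
    (simp_all add: mat_mult_def congr_mat_def id_mat_def delta_mult mult_delta sum.delta)

lemma mat_mult_assoc: "mat_mult n (mat_mult n A B) C i k = mat_mult n A (mat_mult n B C) i k"
  unfolding mat_mult_def by (simp add: sum_distrib_left sum_distrib_right mult.assoc) (rule sum.swap)

lemma mat_mult_inverse:
  assumes X: "\<forall>k<n. \<forall>l<n. mat_mult n X1 Y1 k l = id_mat k l"
    and Y: "\<forall>k<n. \<forall>l<n. mat_mult n X2 Y2 k l = id_mat k l"
    and kl: "k < n" "l < n"
  shows "mat_mult n (mat_mult n X1 X2) (mat_mult n Y2 Y1) k l = id_mat k l"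
proof -
  have "mat_mult n (mat_mult n X2 Y2) Y1 r l = Y1 r l" if "r < n" for r
    unfolding mat_mult_def[of n "mat_mult n X2 Y2"] using Y that
    by (simp add: id_mat_def delta_mult sum.delta)
  then have "mat_mult n X1 (mat_mult n (mat_mult n X2 Y2) Y1) k l = mat_mult n X1 Y1 k l"
    unfolding mat_mult_def[of n X1] by (intro sum.cong refl) auto
  then show ?thesis using X kl unfolding mat_mult_assoc mat_mult_def[of n X1] by (simp add: mat_mult_assoc)
qed

lemma congr_mat_mult: "congr_mat n (mat_mult n P1 P2) G k l = congr_mat n P2 (congr_mat n P1 G) k l"
proof -
  have "congr_mat n P2 (congr_mat n P1 G) k l
      = (\<Sum>i<n. \<Sum>j<n. \<Sum>a<n. \<Sum>b<n. P2 i k * P1 a i * G a b * P1 b j * P2 j l)"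
    unfolding congr_mat_def by (simp add: sum_distrib_left sum_distrib_right mult.assoc)
  also have "\<dots> = (\<Sum>i<n. \<Sum>a<n. \<Sum>j<n. \<Sum>b<n. P2 i k * P1 a i * G a b * P1 b j * P2 j l)"
    by (rule sum.cong[OF refl], rule sum.swap)
  also have "\<dots> = (\<Sum>a<n. \<Sum>i<n. \<Sum>j<n. \<Sum>b<n. P2 i k * P1 a i * G a b * P1 b j * P2 j l)"
    by (rule sum.swap)
  also have "\<dots> = (\<Sum>a<n. \<Sum>i<n. \<Sum>b<n. \<Sum>j<n. P2 i k * P1 a i * G a b * P1 b j * P2 j l)"
    by (rule sum.cong[OF refl], rule sum.cong[OF refl], rule sum.swap)
  also have "\<dots> = (\<Sum>a<n. \<Sum>b<n. \<Sum>i<n. \<Sum>j<n. P2 i k * P1 a i * G a b * P1 b j * P2 j l)"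
    by (rule sum.cong[OF refl], rule sum.swap)
  also have "\<dots> = congr_mat n (mat_mult n P1 P2) G k l"
    unfolding congr_mat_def mat_mult_def
    by (simp add: sum_distrib_left sum_distrib_right mult.assoc mult.left_commute mult.commute)
  finally show ?thesis by simp
qed

lemma gram_iso_trans:
  assumes "gram_iso n G H" and "gram_iso n H K"
  shows "gram_iso n G K"
proof -
  obtain P1 Q1 where
    A: "\<forall>k<n. \<forall>l<n. mat_mult n P1 Q1 k l = id_mat k l" "\<forall>k<n. \<forall>l<n. mat_mult n Q1 P1 k l = id_mat k l"
      "\<forall>k<n. \<forall>l<n. congr_mat n P1 G k l = H k l"
    using assms(1) unfolding gram_iso_iff by blast
  obtain P2 Q2 where
    B: "\<forall>k<n. \<forall>l<n. mat_mult n P2 Q2 k l = id_mat k l" "\<forall>k<n. \<forall>l<n. mat_mult n Q2 P2 k l = id_mat k l"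
      "\<forall>k<n. \<forall>l<n. congr_mat n P2 H k l = K k l"
    using assms(2) unfolding gram_iso_iff by blast
  have "congr_mat n P2 (congr_mat n P1 G) k l = congr_mat n P2 H k l" for k l
    unfolding congr_mat_def[of n P2] using A(3) by (intro sum.cong refl) auto
  then have "congr_mat n (mat_mult n P1 P2) G k l = K k l" if "k < n" "l < n" for k l
    unfolding congr_mat_mult using B(3) that by simp
  then show ?thesis
    using mat_mult_inverse[OF A(1) B(1)] mat_mult_inverse[OF B(2) A(2)]
    by (intro gram_isoI[where P = "mat_mult n P1 P2" and Q = "mat_mult n Q2 Q1"])
qed

lemma sum_lessThan_add: "(\<Sum>i<(n1::nat) + n2. f i) = (\<Sum>i<n1. f i) + (\<Sum>i<n2. f (i + n1))"
  by (induction n2) (auto simp: add.commute add.left_commute)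

lemma mat_mult_osum:
  "mat_mult (n1 + n2) (osum n1 A1 A2) (osum n1 B1 B2) k l
     = osum n1 (mat_mult n1 A1 B1) (mat_mult n2 A2 B2) k l"
  unfolding mat_mult_def sum_lessThan_add osum_def by (auto intro!: sum.cong)

lemma congr_mat_osum:
  "congr_mat (n1 + n2) (osum n1 P1 P2) (osum n1 G1 G2) k l
     = osum n1 (congr_mat n1 P1 G1) (congr_mat n2 P2 G2) k l"
  unfolding congr_mat_def sum_lessThan_add osum_def by (auto intro!: sum.cong)

lemma gram_iso_osum:
  assumes "gram_iso n1 G1 H1" and "gram_iso n2 G2 H2"
  shows "gram_iso (n1 + n2) (osum n1 G1 G2) (osum n1 H1 H2)"
proof -
  obtain P1 Q1 where
    A: "\<forall>k<n1. \<forall>l<n1. mat_mult n1 P1 Q1 k l = id_mat k l" "\<forall>k<n1. \<forall>l<n1. mat_mult n1 Q1 P1 k l = id_mat k l"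
      "\<forall>k<n1. \<forall>l<n1. congr_mat n1 P1 G1 k l = H1 k l"
    using assms(1) unfolding gram_iso_iff by blast
  obtain P2 Q2 where
    B: "\<forall>k<n2. \<forall>l<n2. mat_mult n2 P2 Q2 k l = id_mat k l" "\<forall>k<n2. \<forall>l<n2. mat_mult n2 Q2 P2 k l = id_mat k l"
      "\<forall>k<n2. \<forall>l<n2. congr_mat n2 P2 G2 k l = H2 k l"
    using assms(2) unfolding gram_iso_iff by blast
  have osum_inverse: "osum n1 (mat_mult n1 X1 Y1) (mat_mult n2 X2 Y2) k l = id_mat k l"
    if "\<forall>k<n1. \<forall>l<n1. mat_mult n1 X1 Y1 k l = id_mat k l"
      "\<forall>k<n2. \<forall>l<n2. mat_mult n2 X2 Y2 k l = id_mat k l"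
      "k < n1 + n2" "l < n1 + n2" for X1 Y1 X2 Y2 :: "nat \<Rightarrow> nat \<Rightarrow> 'a" and k l
    using that unfolding osum_def id_mat_def by auto
  show ?thesis
  proof (rule gram_isoI[where P = "osum n1 P1 P2" and Q = "osum n1 Q1 Q2"])
    fix k l assume kl: "k < n1 + n2" "l < n1 + n2"
    show "mat_mult (n1 + n2) (osum n1 P1 P2) (osum n1 Q1 Q2) k l = id_mat k l"
      unfolding mat_mult_osum using osum_inverse[OF A(1) B(1) kl] .
    show "mat_mult (n1 + n2) (osum n1 Q1 Q2) (osum n1 P1 P2) k l = id_mat k l"
      unfolding mat_mult_osum using osum_inverse[OF A(2) B(2) kl] .
    show "congr_mat (n1 + n2) (osum n1 P1 P2) (osum n1 G1 G2) k l = osum n1 H1 H2 k l"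
      unfolding congr_mat_osum using A(3) B(3) kl unfolding osum_def by auto
  qed
qed

lemma gram_iso_perm:
  assumes bij: "bij_betw \<sigma> {..<n} {..<n}"
    and H: "\<And>k l. k < n \<Longrightarrow> l < n \<Longrightarrow> H k l = G (\<sigma> k) (\<sigma> l)"
  shows "gram_iso n G H"
proof (rule gram_isoI[where P = "\<lambda>i k. id_mat i (\<sigma> k)" and Q = "\<lambda>k i. id_mat i (\<sigma> k)"])
  fix k l assume kl: "k < n" "l < n"
  then have \<sigma>kl: "\<sigma> k < n" "\<sigma> l < n" using bij unfolding bij_betw_def by auto
  have "mat_mult n (\<lambda>i k. id_mat i (\<sigma> k)) (\<lambda>k i. id_mat i (\<sigma> k)) k l = (\<Sum>j<n. id_mat k j * id_mat l j)"
    unfolding mat_mult_def using sum.reindex_bij_betw[OF bij, of "\<lambda>j. id_mat k j * id_mat l j"] .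
  also have "\<dots> = id_mat k l" using kl unfolding id_mat_def by (simp add: delta_mult sum.delta)
  finally show "mat_mult n (\<lambda>i k. id_mat i (\<sigma> k)) (\<lambda>k i. id_mat i (\<sigma> k)) k l = id_mat k l" .
  have "mat_mult n (\<lambda>k i. id_mat i (\<sigma> k)) (\<lambda>i k. id_mat i (\<sigma> k)) k l = id_mat (\<sigma> k) (\<sigma> l)"
    unfolding mat_mult_def id_mat_def using \<sigma>kl by (simp add: delta_mult sum.delta)
  also have "\<dots> = id_mat k l"
    using bij kl unfolding bij_betw_def inj_on_def id_mat_def by auto
  finally show "mat_mult n (\<lambda>k i. id_mat i (\<sigma> k)) (\<lambda>i k. id_mat i (\<sigma> k)) k l = id_mat k l" .
  show "congr_mat n (\<lambda>i k. id_mat i (\<sigma> k)) G k l = H k l"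
    unfolding congr_mat_def id_mat_def using \<sigma>kl H kl by (simp add: delta_mult mult_delta sum.delta)
qed

lemma involution_bij: "(\<And>k. k < n \<Longrightarrow> \<sigma> k < n) \<Longrightarrow> (\<And>k. k < n \<Longrightarrow> \<sigma> (\<sigma> k) = k)
    \<Longrightarrow> bij_betw \<sigma> {..<n} {..<n}"
  by (rule bij_betw_byWitness[where f' = \<sigma>]) auto

abbreviation diag2 :: "'a \<Rightarrow> 'a \<Rightarrow> nat \<Rightarrow> nat \<Rightarrow> 'a::field" where
  "diag2 u v \<equiv> diagm (\<lambda>k. if k = 0 then u else v)"

abbreviation hyp_plane :: "nat \<Rightarrow> nat \<Rightarrow> 'a::field" where
  "hyp_plane \<equiv> hyp_gram 1"

text \<open>A change of basis \<open>e\<^sub>0 \<mapsto> p e\<^sub>0 + r e\<^sub>1\<close>, \<open>e\<^sub>1 \<mapsto> q e\<^sub>0 + s e\<^sub>1\<close> of the binary space \<open>[u, v]\<close>.\<close>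

lemma gram_iso_binary:
  fixes p q r s :: "'a::field"
  assumes det: "p * s - q * r \<noteq> 0"
    and "H 0 0 = p * p * u + r * r * v"
    and "H 0 1 = p * q * u + r * s * v" and "H 1 0 = p * q * u + r * s * v"
    and "H 1 1 = q * q * u + s * s * v"
  shows "gram_iso 2 (diag2 u v) H"
proof -
  define P where "P i k = (if i = 0 then (if k = 0 then p else q) else (if k = 0 then r else s))"
    for i k :: nat
  define d where "d = p * s - q * r"
  define Q where "Q i k = (if i = 0 then (if k = 0 then s / d else - q / d)
      else (if k = 0 then - r / d else p / d))" for i k :: nat
  have sum2: "(\<Sum>i<(2::nat). f i) = f 0 + f 1" for f :: "nat \<Rightarrow> 'a"
    by (simp add: numeral_2_eq_2)
  have d: "d \<noteq> 0" using det unfolding d_def .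
  have "d * d \<noteq> 0" using d by simp
  moreover have "d * d = p * (p * (s * s)) + q * (q * (r * r)) - p * (q * (r * (s * 2)))"
    unfolding d_def by (simp add: algebra_simps)
  ultimately have d2: "p * (p * (s * s)) + q * (q * (r * r)) \<noteq> p * (q * (r * (s * 2)))" by simp
  show ?thesis
  proof (rule gram_isoI[where P = P and Q = Q])
    fix k l :: nat assume "k < 2" "l < 2"
    then have kl: "k = 0 \<or> k = 1" "l = 0 \<or> l = 1" by auto
    show "mat_mult 2 P Q k l = id_mat k l" "mat_mult 2 Q P k l = id_mat k l"
      using kl d d2 unfolding mat_mult_def sum2 P_def Q_def id_mat_def d_def
      by (auto simp: field_simps)
    show "congr_mat 2 P (diag2 u v) k l = H k l"
      using kl assms unfolding congr_mat_def sum2 P_def diagm_def by (auto simp: algebra_simps)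
  qed
qed

lemma gram_iso_unary:
  assumes t: "t \<noteq> 0" and H: "H 0 0 = t * t * G 0 0"
  shows "gram_iso 1 G H"
  by (rule gram_isoI[where P = "\<lambda>i k. t" and Q = "\<lambda>i k. inverse t"])
    (use t H in \<open>auto simp: mat_mult_def congr_mat_def id_mat_def algebra_simps\<close>)

lemma diagm_osum: "diagm d = osum n (diagm d) (diagm (\<lambda>i. d (i + n)))"
  unfolding diagm_def osum_def by (auto simp: fun_eq_iff)

lemma hyp_gram_Suc: "hyp_gram (Suc k) = osum (2 * k) (hyp_gram k) (hyp_gram 1)"
proof -
  have "hyp_gram (Suc k) i j = osum (2 * k) (hyp_gram k) (hyp_gram 1) i j" for i j :: nat
    unfolding hyp_gram_def osum_def by (auto; presburger)
  then show ?thesis by (intro ext) simp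
qed

lemma hyp_gram_2: "hyp_gram 2 = osum 2 hyp_plane (hyp_plane :: nat \<Rightarrow> nat \<Rightarrow> 'a::field)"
  unfolding hyp_gram_def osum_def by (intro ext) (auto; presburger)

lemma osum_assoc: "m \<le> n \<Longrightarrow> osum n (osum m A B) C = osum m A (osum (n - m) B C)"
  unfolding osum_def by (auto simp: fun_eq_iff)

lemma osum_0: "osum 0 G H = H"
  unfolding osum_def by (simp add: fun_eq_iff)

lemma gram_iso_osum_swap:
  "gram_iso 4 (osum 2 (A :: nat \<Rightarrow> nat \<Rightarrow> 'a::field) B) (osum 2 B A)"
proof (rule gram_iso_perm[where \<sigma> = "\<lambda>k. if k < 2 then k + 2 else k - 2"])
  show "bij_betw (\<lambda>k::nat. if k < 2 then k + 2 else k - 2) {..<4} {..<4}"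
    by (rule involution_bij) auto
qed (auto simp: osum_def)

text \<open>\<open>[u, v] \<cong> \<bbbH>\<close> as soon as \<open>-uv\<close> is a square: \<open>u\<close> is represented, and the discriminant is \<open>-1\<close>.\<close>

lemma gram_iso_diag2_hyp_plane:
  fixes u v s :: "'a::field"
  assumes two: "(2::'a) \<noteq> 0" and u: "u \<noteq> 0" and s: "s \<noteq> 0" and uv: "- (u * v) = s\<^sup>2"
  shows "gram_iso 2 (diag2 u v) hyp_plane"
proof -
  have "u * v = - s\<^sup>2" using uv by (metis minus_minus)
  then have v: "v = - s\<^sup>2 / u" using u by (simp add: field_simps)
  have H: "hyp_plane 0 0 = 0" "hyp_plane 0 1 = 1" "hyp_plane 1 0 = 1" "hyp_plane 1 1 = (0::'a)"
    unfolding hyp_gram_def by auto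
  show ?thesis
  proof (rule gram_iso_binary[where p = 1 and q = "1 / (2 * u)" and r = "u / s" and s = "- 1 / (2 * s)"])
    show "1 * (- 1 / (2 * s)) - 1 / (2 * u) * (u / s) \<noteq> 0"
      using u s two by (simp add: field_simps)
    show "hyp_plane 0 0 = 1 * 1 * u + u / s * (u / s) * v"
      unfolding v H using u s by (simp add: field_simps power2_eq_square)
    show "hyp_plane 0 1 = 1 * (1 / (2 * u)) * u + u / s * (- 1 / (2 * s)) * v"
      "hyp_plane 1 0 = 1 * (1 / (2 * u)) * u + u / s * (- 1 / (2 * s)) * v"
      unfolding v H using u s two by (simp_all add: field_simps power2_eq_square)
    show "hyp_plane 1 1 = 1 / (2 * u) * (1 / (2 * u)) * u + - 1 / (2 * s) * (- 1 / (2 * s)) * v"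
      unfolding v H using u s two by (simp add: field_simps power2_eq_square)
  qed
qed

section \<open>The planes \<open>\<bbbH>\<close> and \<open>[1, -\<Delta>]\<close>\<close>

context dyadic_field_Delta
begin

abbreviation delta_plane :: "nat \<Rightarrow> nat \<Rightarrow> 'a" where
  "delta_plane \<equiv> diag2 1 (- \<Delta>)"

text \<open>\<open>[1, -\<Delta>]\<close> is the norm form of \<open>F(\<surd>\<Delta>)\<close>, which represents every unit.\<close>

lemma delta_plane_iso_diag2:
  assumes c: "c \<noteq> 0" "ord c = 0"
  shows "gram_iso 2 delta_plane (diag2 (- c) (\<Delta> / c))"
proof -
  obtain x y where xy: "x\<^sup>2 - \<Delta> * y\<^sup>2 = - c" using norm_form_surj[of "- c"] c by auto
  have "x * (x / c) - \<Delta> * y / c * y = (x\<^sup>2 - \<Delta> * y\<^sup>2) / c"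
    by (simp add: power2_eq_square algebra_simps diff_divide_distrib)
  then have det: "x * (x / c) - \<Delta> * y / c * y \<noteq> 0" using xy c by simp
  have "\<Delta> * y / c * (\<Delta> * y / c) * 1 + x / c * (x / c) * - \<Delta> = - \<Delta> * (x\<^sup>2 - \<Delta> * y\<^sup>2) / (c * c)"
    using c by (simp add: field_simps power2_eq_square)
  also have "\<dots> = - \<Delta> * (- c) / (c * c)" using xy by simp
  also have "\<dots> = \<Delta> / c" using c by (simp add: field_simps)
  finally have "diag2 (- c) (\<Delta> / c) 1 1 = \<Delta> * y / c * (\<Delta> * y / c) * 1 + x / c * (x / c) * - \<Delta>"
    by (simp add: diagm_def)
  then show ?thesis
    by (intro gram_iso_binary[where p = x and q = "\<Delta> * y / c" and r = y and s = "x / c", OF det])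
      (use xy in \<open>simp_all add: diagm_def power2_eq_square algebra_simps\<close>)
qed

lemma gram_iso_diag2_delta_plane:
  assumes u: "u \<noteq> 0" "ord u = 0" and s: "s \<noteq> 0" and uv: "- (u * v) = \<Delta> * s\<^sup>2"
  shows "gram_iso 2 (diag2 u v) delta_plane"
proof -
  have "u * v = - (\<Delta> * s\<^sup>2)" using uv by (metis minus_minus)
  then have v: "v = - \<Delta> * s\<^sup>2 / u" using u by (simp add: field_simps)
  obtain x y where "x\<^sup>2 - \<Delta> * y\<^sup>2 = inverse u"
    using norm_form_surj[of "inverse u"] u by (auto simp: ord_inverse)
  then have xy: "u * x\<^sup>2 - u * \<Delta> * y\<^sup>2 = 1" using u by (simp add: field_simps)
  have "x * (x * u / s) - \<Delta> * y * (y * u / s) = (u * x\<^sup>2 - u * \<Delta> * y\<^sup>2) / s"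
    by (simp add: power2_eq_square algebra_simps diff_divide_distrib)
  then have det: "x * (x * u / s) - \<Delta> * y * (y * u / s) \<noteq> 0" using xy s by simp
  have "x * x * u + y * u / s * (y * u / s) * v = u * x\<^sup>2 - u * \<Delta> * y\<^sup>2"
    "x * (\<Delta> * y) * u + y * u / s * (x * u / s) * v = 0"
    "\<Delta> * y * (\<Delta> * y) * u + x * u / s * (x * u / s) * v = - \<Delta> * (u * x\<^sup>2 - u * \<Delta> * y\<^sup>2)"
    unfolding v using u s by (simp_all add: field_simps power2_eq_square)
  then show ?thesis
    by (intro gram_iso_binary[where p = x and q = "\<Delta> * y" and r = "y * u / s" and s = "x * u / s", OF det])
      (use xy in \<open>simp_all add: diagm_def\<close>)
qed

text \<open>\<open>[1, -\<Delta>] \<perp> [1, -\<Delta>] \<cong> [1, -1] \<perp> [-\<Delta>, \<Delta>] \<cong> \<bbbH> \<perp> \<bbbH>\<close>.\<close>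

lemma delta_plane_osum_self: "gram_iso 4 (osum 2 delta_plane delta_plane) (hyp_gram 2)"
proof -
  have "gram_iso 2 delta_plane (diag2 (-1) (\<Delta> / 1))" by (rule delta_plane_iso_diag2) simp_all
  then have "gram_iso 2 delta_plane (diag2 (-1) \<Delta>)" unfolding div_by_1 .
  from gram_iso_osum[OF gram_iso_refl[where n = 2 and G = delta_plane] this]
  have iso1: "gram_iso 4 (osum 2 delta_plane delta_plane) (osum 2 delta_plane (diag2 (-1) \<Delta>))" by simp
  have iso2: "gram_iso 4 (osum 2 delta_plane (diag2 (-1) \<Delta>)) (osum 2 (diag2 1 (-1)) (diag2 (- \<Delta>) \<Delta>))"
  proof (rule gram_iso_perm[where \<sigma> = "\<lambda>k::nat. if k = 1 then 2 else if k = 2 then 1 else k"])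
    show "bij_betw (\<lambda>k::nat. if k = 1 then 2 else if k = 2 then 1 else k) {..<4} {..<4}"
      by (rule involution_bij) auto
    fix k l :: nat assume "k < 4" "l < 4"
    then have "k = 0 \<or> k = 1 \<or> k = 2 \<or> k = 3" "l = 0 \<or> l = 1 \<or> l = 2 \<or> l = 3" by arith+
    then show "osum 2 (diag2 1 (- 1)) (diag2 (- \<Delta>) \<Delta>) k l =
      osum 2 delta_plane (diag2 (- 1) \<Delta>) (if k = 1 then 2 else if k = 2 then 1 else k)
        (if l = 1 then 2 else if l = 2 then 1 else l)"
      unfolding osum_def diagm_def by auto
  qed
  have "gram_iso 2 (diag2 1 (-1)) (hyp_plane :: nat \<Rightarrow> nat \<Rightarrow> 'a)"
    by (rule gram_iso_diag2_hyp_plane[OF two_neq_zero, where s = 1]) simp_all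
  moreover have "gram_iso 2 (diag2 (- \<Delta>) \<Delta>) hyp_plane"
    by (rule gram_iso_diag2_hyp_plane[OF two_neq_zero, where s = \<Delta>])
      (use Delta_unit in \<open>simp_all add: power2_eq_square\<close>)
  ultimately have "gram_iso (2 + 2) (osum 2 (diag2 1 (-1)) (diag2 (- \<Delta>) \<Delta>)) (osum 2 hyp_plane hyp_plane)"
    by (rule gram_iso_osum)
  then
  have iso3: "gram_iso 4 (osum 2 (diag2 1 (-1)) (diag2 (- \<Delta>) \<Delta>)) (osum 2 hyp_plane hyp_plane)" by simp
  show ?thesis unfolding hyp_gram_2 by (rule gram_iso_trans[OF gram_iso_trans[OF iso1 iso2] iso3])
qed

text \<open>\<open>[1, -\<Delta>] \<perp> [c] \<cong> [-c, \<Delta>/c] \<perp> [c] \<cong> [-c, c] \<perp> [\<Delta>/c] \<cong> \<bbbH> \<perp> [\<Delta>/c]\<close>.\<close>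

lemma delta_plane_osum_unit:
  assumes c: "c \<noteq> 0" "ord c = 0"
  shows "gram_iso 3 (osum 2 delta_plane (diagm (\<lambda>k. c))) (osum 2 hyp_plane (diagm (\<lambda>k. \<Delta> / c)))"
proof -
  from gram_iso_osum[OF delta_plane_iso_diag2[OF c] gram_iso_refl[where n = 1 and G = "diagm (\<lambda>k. c)"]]
  have iso1: "gram_iso 3 (osum 2 delta_plane (diagm (\<lambda>k. c))) (osum 2 (diag2 (- c) (\<Delta> / c)) (diagm (\<lambda>k. c)))"
    by simp
  have iso2: "gram_iso 3 (osum 2 (diag2 (- c) (\<Delta> / c)) (diagm (\<lambda>k. c)))
      (osum 2 (diag2 (- c) c) (diagm (\<lambda>k. \<Delta> / c)))"
  proof (rule gram_iso_perm[where \<sigma> = "\<lambda>k::nat. if k = 1 then 2 else if k = 2 then 1 else k"])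
    show "bij_betw (\<lambda>k::nat. if k = 1 then 2 else if k = 2 then 1 else k) {..<3} {..<3}"
      by (rule involution_bij) auto
    fix k l :: nat assume "k < 3" "l < 3"
    then have "k = 0 \<or> k = 1 \<or> k = 2" "l = 0 \<or> l = 1 \<or> l = 2" by arith+
    then show "osum 2 (diag2 (- c) c) (diagm (\<lambda>k. \<Delta> / c)) k l =
      osum 2 (diag2 (- c) (\<Delta> / c)) (diagm (\<lambda>k. c)) (if k = 1 then 2 else if k = 2 then 1 else k)
        (if l = 1 then 2 else if l = 2 then 1 else l)"
      unfolding osum_def diagm_def by auto
  qed
  have "gram_iso 2 (diag2 (- c) c) hyp_plane"
    by (rule gram_iso_diag2_hyp_plane[OF two_neq_zero, where s = c]) (use c in \<open>simp_all add: power2_eq_square\<close>)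
  from gram_iso_osum[OF this gram_iso_refl[where n = 1 and G = "diagm (\<lambda>k. \<Delta> / c)"]]
  have iso3: "gram_iso 3 (osum 2 (diag2 (- c) c) (diagm (\<lambda>k. \<Delta> / c))) (osum 2 hyp_plane (diagm (\<lambda>k. \<Delta> / c)))"
    by simp
  show ?thesis by (rule gram_iso_trans[OF gram_iso_trans[OF iso1 iso2] iso3])
qed

definition hyp_or_hyp_delta :: "nat \<Rightarrow> (nat \<Rightarrow> nat \<Rightarrow> 'a) \<Rightarrow> bool" where
  "hyp_or_hyp_delta k G \<longleftrightarrow> gram_iso (2 * Suc k) G (hyp_gram (Suc k))
     \<or> gram_iso (2 * Suc k) G (osum (2 * k) (hyp_gram k) delta_plane)"

lemma osum_hyp_gram_assoc:
  "osum (2 * Suc k) (osum (2 * k) (hyp_gram k) A) Z = osum (2 * k) (hyp_gram k) (osum 2 A Z)"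
  using osum_assoc[of "2 * k" "2 * Suc k"] by simp

lemma gram_iso_osum_hyp_gram:
  "gram_iso n A B \<Longrightarrow> gram_iso (2 * k + n) (osum (2 * k) (hyp_gram k) A) (osum (2 * k) (hyp_gram k) B)"
  by (rule gram_iso_osum[OF gram_iso_refl])

lemma hyp_delta_osum_hyp_plane:
  "gram_iso (2 * Suc (Suc k)) (osum (2 * Suc k) (osum (2 * k) (hyp_gram k) delta_plane) hyp_plane)
    (osum (2 * Suc k) (hyp_gram (Suc k)) delta_plane)"
proof -
  have "gram_iso (2 * k + 4) (osum (2 * k) (hyp_gram k) (osum 2 delta_plane hyp_plane))
      (osum (2 * k) (hyp_gram k) (osum 2 hyp_plane delta_plane))"
    by (rule gram_iso_osum_hyp_gram[OF gram_iso_osum_swap])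
  moreover have "2 * k + 4 = 2 * Suc (Suc k)" by simp
  ultimately show ?thesis unfolding osum_hyp_gram_assoc hyp_gram_Suc[of k] by simp
qed

lemma hyp_delta_osum_delta_plane:
  "gram_iso (2 * Suc (Suc k)) (osum (2 * Suc k) (osum (2 * k) (hyp_gram k) delta_plane) delta_plane)
    (hyp_gram (Suc (Suc k)))"
proof -
  have "gram_iso (2 * k + 4) (osum (2 * k) (hyp_gram k) (osum 2 delta_plane delta_plane))
      (osum (2 * k) (hyp_gram k) (osum 2 hyp_plane hyp_plane))"
    using gram_iso_osum_hyp_gram[OF delta_plane_osum_self] unfolding hyp_gram_2 .
  moreover have "2 * k + 4 = 2 * Suc (Suc k)" by simp
  ultimately show ?thesis
    unfolding osum_hyp_gram_assoc hyp_gram_Suc[of "Suc k"] hyp_gram_Suc[of k] by simp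
qed

lemma hyp_or_hyp_delta_osum:
  assumes G: "hyp_or_hyp_delta k G"
    and Y: "gram_iso 2 Y hyp_plane \<or> gram_iso 2 Y delta_plane"
  shows "hyp_or_hyp_delta (Suc k) (osum (2 * Suc k) G Y)"
proof -
  have osum_iso: "gram_iso (2 * Suc (Suc k)) (osum (2 * Suc k) G Y) (osum (2 * Suc k) X Z)"
    if "gram_iso (2 * Suc k) G X" "gram_iso 2 Y Z" for X Z
    using gram_iso_osum[OF that] by (simp add: ac_simps)
  have "gram_iso (2 * Suc (Suc k)) (osum (2 * Suc k) (hyp_gram (Suc k)) hyp_plane) (hyp_gram (Suc (Suc k)))"
    unfolding hyp_gram_Suc[of "Suc k"] by (rule gram_iso_refl)
  then show ?thesis
    using G Y osum_iso gram_iso_trans hyp_delta_osum_hyp_plane hyp_delta_osum_delta_plane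
    unfolding hyp_or_hyp_delta_def by meson
qed

lemma diag_hyp_or_hyp_delta:
  assumes pairs: "\<And>t. t \<le> k \<Longrightarrow>
    gram_iso 2 (diag2 (b (2 * t)) (b (2 * t + 1))) hyp_plane \<or>
    gram_iso 2 (diag2 (b (2 * t)) (b (2 * t + 1))) delta_plane"
  shows "hyp_or_hyp_delta k (diagm b)"
  using pairs
proof (induction k)
  have block: "gram_iso 2 (diagm (\<lambda>i. b (i + 2 * t))) X"
    if "gram_iso 2 (diag2 (b (2 * t)) (b (2 * t + 1))) X" for t X
    using that by (rule gram_iso_cong) (auto simp: diagm_def less_Suc_eq numeral_2_eq_2)
  {
    case 0
    then show ?case using block[of 0] unfolding hyp_or_hyp_delta_def
      by (fastforce simp: osum_0)
  next
    case (Suc k)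
    have "gram_iso 2 (diagm (\<lambda>i. b (i + 2 * Suc k))) hyp_plane \<or>
        gram_iso 2 (diagm (\<lambda>i. b (i + 2 * Suc k))) delta_plane"
      using Suc.prems[of "Suc k"] block by blast
    moreover have "hyp_or_hyp_delta k (diagm b)" using Suc by simp
    ultimately have "hyp_or_hyp_delta (Suc k) (osum (2 * Suc k) (diagm b) (diagm (\<lambda>i. b (i + 2 * Suc k))))"
      by (intro hyp_or_hyp_delta_osum)
    then show ?case unfolding diagm_osum[of b "2 * Suc k", symmetric] .
  }
qed

lemma hyp_delta_osum_unit:
  assumes c: "c \<noteq> 0" "ord c = 0"
  shows "gram_iso (2 * Suc k + 1) (osum (2 * Suc k) (osum (2 * k) (hyp_gram k) delta_plane) (diagm (\<lambda>i. c)))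
    (osum (2 * Suc k) (hyp_gram (Suc k)) (diagm (\<lambda>i. \<Delta> / c)))"
proof -
  have "gram_iso (2 * k + 3) (osum (2 * k) (hyp_gram k) (osum 2 delta_plane (diagm (\<lambda>i. c))))
      (osum (2 * k) (hyp_gram k) (osum 2 hyp_plane (diagm (\<lambda>i. \<Delta> / c))))"
    by (rule gram_iso_osum_hyp_gram[OF delta_plane_osum_unit[OF c]])
  moreover have "2 * k + 3 = 2 * Suc k + 1" by simp
  ultimately show ?thesis unfolding osum_hyp_gram_assoc hyp_gram_Suc[of k] by simp
qed

lemma hyp_or_hyp_delta_osum_unit:
  assumes G: "hyp_or_hyp_delta k G" and c: "c \<noteq> 0" "ord c = 0"
  shows "\<exists>\<epsilon>. (\<epsilon> = c \<or> \<epsilon> = \<Delta> / c) \<and>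
    gram_iso (2 * Suc k + 1) (osum (2 * Suc k) G (diagm (\<lambda>i. c)))
      (osum (2 * Suc k) (hyp_gram (Suc k)) (diagm (\<lambda>i. \<epsilon>)))"
proof -
  have osum_iso: "gram_iso (2 * Suc k + 1) (osum (2 * Suc k) G (diagm (\<lambda>i. c))) (osum (2 * Suc k) X (diagm (\<lambda>i. c)))"
    if "gram_iso (2 * Suc k) G X" for X
    by (rule gram_iso_osum[OF that gram_iso_refl])
  show ?thesis
    using G osum_iso gram_iso_trans[OF osum_iso hyp_delta_osum_unit[OF c]]
    unfolding hyp_or_hyp_delta_def by blast
qed

end

section \<open>BONGs of lattices\<close>

definition add_closed :: "'v::ab_group_add set \<Rightarrow> bool" where
  "add_closed N \<longleftrightarrow> (\<forall>x\<in>N. \<forall>y\<in>N. x + y \<in> N)"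

lemma Ospan_add_closed: "add_closed (Ospan ord scale G)"
  unfolding add_closed_def
proof (intro ballI)
  fix x y assume "x \<in> Ospan ord scale G" "y \<in> Ospan ord scale G"
  then obtain n1 c1 v1 n2 c2 v2 where
    x: "x = (\<Sum>k<(n1::nat). scale (c1 k) (v1 k))" "\<forall>k<n1. c1 k \<in> val_ring ord \<and> v1 k \<in> G" and
    y: "y = (\<Sum>k<(n2::nat). scale (c2 k) (v2 k))" "\<forall>k<n2. c2 k \<in> val_ring ord \<and> v2 k \<in> G"
    unfolding Ospan_def by blast
  define c where "c k = (if k < n1 then c1 k else c2 (k - n1))" for k
  define v where "v k = (if k < n1 then v1 k else v2 (k - n1))" for k
  have "x + y = (\<Sum>k<n1 + n2. scale (c k) (v k))"
    unfolding sum_lessThan_add x y c_def v_def by simp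
  moreover have "\<forall>k<n1 + n2. c k \<in> val_ring ord \<and> v k \<in> G"
    using x(2) y(2) unfolding c_def v_def by auto
  ultimately show "x + y \<in> Ospan ord scale G" unfolding Ospan_def by blast
qed

locale sym_bilinear_space =
  fixes scale :: "'a::field \<Rightarrow> 'v::ab_group_add \<Rightarrow> 'v" and B :: "'v \<Rightarrow> 'v \<Rightarrow> 'a"
  assumes vector_space: "vector_space scale" and sym_bilinear: "sym_bilinear scale B"
begin

lemma B_sym: "B u v = B v u"
  using sym_bilinear unfolding sym_bilinear_def by blast

lemma B_add: "B (u + v) w = B u w + B v w"
  using sym_bilinear unfolding sym_bilinear_def by blast

lemma B_scale: "B (scale c u) w = c * B u w"
  using sym_bilinear unfolding sym_bilinear_def by blast

lemma B_diff: "B (u - v) w = B u w - B v w"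
  using B_add[of "u - v" v w] by (simp add: algebra_simps)

lemma scale_left_distrib: "scale (a + b) x = scale a x + scale b x"
  using vector_space unfolding vector_space_def by blast

lemma proj_add: "proj scale B x (u + v) = proj scale B x u + proj scale B x v"
  unfolding proj_def B_add add_divide_distrib scale_left_distrib by (simp add: algebra_simps)

lemma add_closed_proj: "add_closed N \<Longrightarrow> add_closed (proj scale B x ` N)"
  unfolding add_closed_def
proof (intro ballI)
  fix p q assume N: "\<forall>x\<in>N. \<forall>y\<in>N. x + y \<in> N" and "p \<in> proj scale B x ` N" "q \<in> proj scale B x ` N"
  then obtain u w where "u \<in> N" "w \<in> N" "p = proj scale B x u" "q = proj scale B x w" by blast
  then have "p + q = proj scale B x (u + w)" "u + w \<in> N" using proj_add N by auto
  then show "p + q \<in> proj scale B x ` N" by blast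
qed

lemma Q_proj: "B x x \<noteq> 0 \<Longrightarrow> B (proj scale B x v) (proj scale B x v) = B v v - (B v x)\<^sup>2 / B x x"
proof -
  assume q: "B x x \<noteq> 0"
  define s where "s = B v x / B x x"
  have "B (v - scale s x) (v - scale s x) = B v v - s * B x v - s * (B v x - s * B x x)"
    using B_sym[of v "v - scale s x"] B_sym[of x "v - scale s x"] by (simp add: B_diff B_scale)
  also have "\<dots> = B v v - (B v x)\<^sup>2 / B x x"
    unfolding s_def using q B_sym[of x v] by (simp add: field_simps power2_eq_square)
  finally show ?thesis unfolding proj_def s_def .
qed

lemma Q_add: "B (x + v) (x + v) = B x x + 2 * B v x + B v v"
  using B_sym[of x "x + v"] B_sym[of v "x + v"] B_sym[of x v] by (simp add: B_add)

lemma BONG_nonzero: "is_BONG ord scale B xs M \<Longrightarrow> x \<in> set xs \<Longrightarrow> B x x \<noteq> 0"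
  by (induction xs arbitrary: M) auto

lemma BONG_drop:
  "is_BONG ord scale B xs M \<Longrightarrow> add_closed M \<Longrightarrow> k \<le> length xs \<Longrightarrow>
   \<exists>N. is_BONG ord scale B (drop k xs) N \<and> add_closed N"
proof (induction k arbitrary: xs M)
  case (Suc k)
  then obtain x ys where xs: "xs = x # ys" by (cases xs) auto
  then have "is_BONG ord scale B ys (proj scale B x ` M)" "add_closed (proj scale B x ` M)"
    using Suc.prems add_closed_proj by auto
  then show ?case using Suc.IH[of ys "proj scale B x ` M"] Suc.prems xs by simp
qed auto

end

locale dyadic_quadratic_space = dyadic_field ord + sym_bilinear_space scale B
  for ord :: "'a::field \<Rightarrow> int" and scale :: "'a \<Rightarrow> 'v::ab_group_add \<Rightarrow> 'v" and B
begin

lemma Q_in_norm_ideal: "v \<in> N \<Longrightarrow> B v v \<in> norm_ideal ord B N"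
  unfolding norm_ideal_def
  by (rule CollectI, rule exI[of _ 1], rule exI[of _ "\<lambda>_. 1"], rule exI[of _ "\<lambda>_. v"])
    (use int_ring_1 in simp)

text \<open>For consecutive BONG vectors \<open>x, y\<close>: \<open>y = v - (B v x / Q x) x\<close> with \<open>v, x + v\<close> in the lattice,
  so \<open>2 B v x / Q x\<close> is integral; this bounds \<open>Q y / Q x\<close> below by \<open>\<pi>\<^bsup>-2e\<^esup>\<close>, and
  \<open>-Q x Q y = (B v x)\<^sup>2 - Q x Q v\<close> is a square up to the factor \<open>1 - Q v / Q y\<close>.\<close>

lemma BONG_consecutive:
  assumes BONG: "is_BONG ord scale B (x # y # rest) N" and N: "add_closed N"
  shows "B x x \<noteq> 0 \<and> B y y \<noteq> 0 \<and> val_ge ord (B y y / B x x) (- 2 * ord 2) \<and>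
    (\<exists>\<beta>. val_ge ord ((- (B x x * B y y) - \<beta>\<^sup>2) / (- (B x x * B y y))) (ord (B x x) - ord (B y y)))"
proof -
  let ?a = "B x x" and ?b = "B y y"
  have a: "?a \<noteq> 0" and nx: "principal ord ?a = norm_ideal ord B N" and xN: "x \<in> N"
    and b: "?b \<noteq> 0" and yN: "y \<in> proj scale B x ` N"
    using BONG by auto
  obtain v where v: "v \<in> N" "y = proj scale B x v" using yN by blast
  have in_N: "val_ge ord (B w w / ?a) 0" if "w \<in> N" for w
    using Q_in_norm_ideal[OF that] nx principal_iff[OF a] by simp
  have qv: "val_ge ord (B v v / ?a) 0" using in_N v(1) .
  have "val_ge ord (B (x + v) (x + v) / ?a - 1 - B v v / ?a) 0"
    using in_N N xN v(1) qv val_ge_diff val_ge_1_iff unfolding add_closed_def by auto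
  moreover have "2 * (B v x / ?a) = B (x + v) (x + v) / ?a - 1 - B v v / ?a"
    unfolding Q_add using a by (simp add: field_simps)
  ultimately have "val_ge ord (B v x / ?a * 2) 0" by (simp add: mult.commute)
  then have "val_ge ord (B v x / ?a) (- ord 2)"
    using val_ge_mult_iff[OF two_neq_zero, of "B v x / ?a" 0] by simp
  then have "val_ge ord ((B v x / ?a)\<^sup>2) (2 * (- ord 2))" using val_ge_square_iff by blast
  moreover have qy: "?b = B v v - (B v x)\<^sup>2 / ?a" using Q_proj[OF a] v(2) by simp
  then have "?b / ?a = B v v / ?a - (B v x / ?a)\<^sup>2" using a by (simp add: field_simps power2_eq_square)
  ultimately have ratio: "val_ge ord (?b / ?a) (- 2 * ord 2)"
    using val_ge_diff[OF val_ge_mono[OF qv, of "- 2 * ord 2"]] ord_two_ge_1 by simp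
  have "- (?a * ?b) - (B v x)\<^sup>2 = - (?a * B v v)" unfolding qy using a by (simp add: field_simps)
  then have "(- (?a * ?b) - (B v x)\<^sup>2) / (- (?a * ?b)) = (B v v / ?a) * (?a / ?b)"
    using a b by (simp add: divide_simps)
  moreover have "val_ge ord (?a / ?b) (ord ?a - ord ?b)" using a b by (simp add: val_ge_def ord_divide)
  then have "val_ge ord ((B v v / ?a) * (?a / ?b)) (0 + (ord ?a - ord ?b))" by (rule val_ge_mult[OF qv])
  ultimately have "val_ge ord ((- (?a * ?b) - (B v x)\<^sup>2) / (- (?a * ?b))) (ord ?a - ord ?b)"
    by (simp only:) simp
  then show ?thesis using a b ratio by blast
qed

end

section \<open>Integral lattices with a good BONG\<close>

lemma aprod_pair: "1 \<le> i \<Longrightarrow> aprod a (i - 1) i = a (i - 1) * a i"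
  by (cases i) (auto simp: aprod_def atLeastAtMostSuc_conv)

lemma aprod_Suc_Suc: "aprod a 1 (Suc (Suc n)) = aprod a 1 n * a (Suc n) * a (Suc (Suc n))"
  unfolding aprod_def by (simp add: atLeastAtMostSuc_conv mult.assoc)

locale integral_good_BONG = dyadic_quadratic_space ord scale B
  for ord :: "'a::field \<Rightarrow> int" and scale :: "'a \<Rightarrow> 'v::ab_group_add \<Rightarrow> 'v" and B +
  fixes M :: "'v set" and xs :: "'v list" and a :: "nat \<Rightarrow> 'a" and m :: nat
  assumes M_add_closed: "add_closed M"
    and integral: "\<forall>v\<in>M. B v v \<in> val_ring ord"
    and BONG: "is_BONG ord scale B xs M" and good: "good_BONG ord B xs" and length_xs: "length xs = m"
    and a_def: "\<forall>i. 1 \<le> i \<and> i \<le> m \<longrightarrow> a i = B (xs ! (i - 1)) (xs ! (i - 1))"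
begin

lemma consecutive:
  assumes i: "1 \<le> i" "i + 1 \<le> m"
  shows "a i \<noteq> 0 \<and> a (i + 1) \<noteq> 0 \<and> val_ge ord (a (i + 1) / a i) (- 2 * ord 2) \<and>
    (\<exists>\<beta>. val_ge ord ((- (a i * a (i + 1)) - \<beta>\<^sup>2) / (- (a i * a (i + 1)))) (ord (a i) - ord (a (i + 1))))"
proof -
  have "i - 1 \<le> length xs" using i length_xs by simp
  then obtain N where N: "is_BONG ord scale B (drop (i - 1) xs) N" "add_closed N"
    using BONG_drop[OF BONG M_add_closed] by blast
  have len: "i - 1 < length xs" "i < length xs" using i length_xs by simp_all
  have "drop (i - 1) xs = xs ! (i - 1) # drop i xs"
    using Cons_nth_drop_Suc[OF len(1)] i by simp
  also have "drop i xs = xs ! i # drop (i + 1) xs" using Cons_nth_drop_Suc[OF len(2)] by simp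
  finally have "drop (i - 1) xs = xs ! (i - 1) # xs ! i # drop (i + 1) xs" .
  moreover have "a i = B (xs ! (i - 1)) (xs ! (i - 1))" "a (i + 1) = B (xs ! i) (xs ! i)"
    using a_def i by auto
  ultimately show ?thesis using BONG_consecutive N by simp
qed

lemma a_nonzero: "1 \<le> i \<Longrightarrow> i \<le> m \<Longrightarrow> a i \<noteq> 0"
  using BONG_nonzero[OF BONG, of "xs ! (i - 1)"] a_def length_xs by simp

lemma ord_a1_nonneg:
  assumes "1 \<le> m"
  shows "0 \<le> ord (a 1)"
proof -
  obtain x rest where xs: "xs = x # rest" using assms length_xs by (cases xs) auto
  then have "x \<in> M" "a 1 = B x x" "B x x \<noteq> 0" using BONG a_def assms by auto
  then show ?thesis using integral by (auto simp: val_ge_def)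
qed

lemma ord_succ_ge: "1 \<le> i \<Longrightarrow> i + 1 \<le> m \<Longrightarrow> ord (a i) - 2 * ord 2 \<le> ord (a (i + 1))"
  using consecutive[of i] by (auto simp: val_ge_def ord_divide)

lemma approx_square_consecutive:
  assumes "1 \<le> i" "i + 1 \<le> m"
  obtains \<beta> where
    "val_ge ord ((- (a i * a (i + 1)) - \<beta>\<^sup>2) / (- (a i * a (i + 1)))) (ord (a i) - ord (a (i + 1)))"
  using consecutive[OF assms] by blast

lemma dd_consecutive_ge:
  assumes i: "1 \<le> i" "i + 1 \<le> m"
  shows "ereal (of_int (ord (a i) - ord (a (i + 1)))) \<le> dd ord (- (a i * a (i + 1)))"
    and "0 \<le> dd ord (- (a i * a (i + 1)))"
proof -
  have nz: "- (a i * a (i + 1)) \<noteq> 0" using a_nonzero i by simp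
  obtain \<beta> where
    "val_ge ord ((- (a i * a (i + 1)) - \<beta>\<^sup>2) / (- (a i * a (i + 1)))) (ord (a i) - ord (a (i + 1)))"
    using approx_square_consecutive[OF i] .
  then show "ereal (of_int (ord (a i) - ord (a (i + 1)))) \<le> dd ord (- (a i * a (i + 1)))"
    by (rule dd_ge[OF nz])
  show "0 \<le> dd ord (- (a i * a (i + 1)))" by (rule dd_nonneg[OF nz])
qed

lemma even_ord_consecutive:
  assumes i: "1 \<le> i" "i + 1 \<le> m" and less: "ord (a (i + 1)) < ord (a i)"
  shows "even (ord (a i) + ord (a (i + 1)))"
proof -
  have nz: "a i \<noteq> 0" "a (i + 1) \<noteq> 0" using a_nonzero i by auto
  obtain \<beta> where
    "val_ge ord ((- (a i * a (i + 1)) - \<beta>\<^sup>2) / (- (a i * a (i + 1)))) (ord (a i) - ord (a (i + 1)))"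
    using approx_square_consecutive[OF i] .
  moreover have "- (a i * a (i + 1)) \<noteq> 0" using nz by simp
  ultimately have "even (ord (- (a i * a (i + 1))))"
    by (intro even_ord_of_approx_square[of _ \<beta> "ord (a i) - ord (a (i + 1))"]) (use less in auto)
  then show ?thesis using nz by (simp add: ord_mult)
qed

lemma square_mod_four_consecutive:
  assumes i: "1 \<le> i" "i + 1 \<le> m" and drop: "ord (a i) - ord (a (i + 1)) = 2 * ord 2"
  shows "square_mod_four (- (a i * a (i + 1)))"
  using approx_square_consecutive[OF i] a_nonzero[of i] a_nonzero[of "i + 1"] i drop
  unfolding square_mod_four_def by auto

lemma ord_le_ord_add2:
  assumes "1 \<le> i" "i + 2 \<le> m"
  shows "ord (a i) \<le> ord (a (i + 2))"
proof -
  have "(i - 1) + 2 < length xs" using assms length_xs by simp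
  then have "ord (B (xs ! (i - 1)) (xs ! (i - 1))) \<le> ord (B (xs ! (i - 1 + 2)) (xs ! (i - 1 + 2)))"
    using good unfolding good_BONG_def by blast
  moreover have "a i = B (xs ! (i - 1)) (xs ! (i - 1))" "a (i + 2) = B (xs ! (i - 1 + 2)) (xs ! (i - 1 + 2))"
    using a_def assms by (auto simp: Suc_diff_le)
  ultimately show ?thesis by simp
qed

lemma ord_mono_same_parity:
  assumes "1 \<le> i" "i \<le> j" "j \<le> m" "even (j - i)"
  shows "ord (a i) \<le> ord (a j)"
proof -
  obtain d where "j - i = 2 * d" using assms(4) by (rule evenE)
  then have j: "j = i + 2 * d" using assms(2) by simp
  have "ord (a i) \<le> ord (a (i + 2 * d))" if "i + 2 * d \<le> m" for d
    using that
  proof (induction d)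
    case (Suc d)
    then have "ord (a i) \<le> ord (a (i + 2 * d))" by simp
    also have "\<dots> \<le> ord (a (i + 2 * d + 2))" using ord_le_ord_add2[of "i + 2 * d"] Suc.prems assms(1) by simp
    finally show ?case by (simp add: add.assoc)
  qed simp
  then show ?thesis using j assms by simp
qed

lemma ord_odd_mono:
  assumes "odd i" "odd j" "1 \<le> i" "i \<le> j" "j \<le> m"
  shows "ord (a i) \<le> ord (a j) \<and> 0 \<le> ord (a i)"
  using ord_mono_same_parity[of i j] ord_mono_same_parity[of 1 i] ord_a1_nonneg assms by simp

lemma ord_even_mono:
  assumes "even i" "even j" "1 \<le> i" "i \<le> j" "j \<le> m"
  shows "ord (a i) \<le> ord (a j) \<and> - 2 * ord 2 \<le> ord (a i)"
proof -
  have "2 \<le> i" using assms by presburger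
  then show ?thesis
    using ord_mono_same_parity[of i j] ord_mono_same_parity[of 2 i] ord_succ_ge[of 1]
      ord_a1_nonneg assms by (simp add: numeral_2_eq_2)
qed

lemma ord_zero_prefix:
  assumes "odd j" "1 \<le> j" "j \<le> m" "ord (a j) = 0"
  shows "(\<forall>i. odd i \<and> 1 \<le> i \<and> i \<le> j \<longrightarrow> ord (a i) = 0)
    \<and> (\<forall>i. 1 \<le> i \<and> i \<le> j \<longrightarrow> even (ord (a i)))"
proof -
  have odd_zero: "ord (a i) = 0" if "odd i" "1 \<le> i" "i \<le> j" for i
    using ord_odd_mono[of i j] assms that by force
  have "even (ord (a i))" if i: "1 \<le> i" "i \<le> j" for i
  proof (cases "odd i")
    case False
    then have i2: "2 \<le> i" "i + 1 \<le> j" using i assms by presburger+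
    have "ord (a (i - 1)) = 0" "ord (a (i + 1)) = 0"
      using odd_zero[of "i - 1"] odd_zero[of "i + 1"] False i2 by simp_all
    moreover have "even (ord (a (i - 1)) + ord (a i))" if "ord (a i) < ord (a (i - 1))"
      using even_ord_consecutive[of "i - 1"] that i2 assms by simp
    moreover have "even (ord (a i) + ord (a (i + 1)))" if "ord (a (i + 1)) < ord (a i)"
      using even_ord_consecutive[of i] that i2 assms by simp
    ultimately show ?thesis by (cases "ord (a i) < 0"; cases "ord (a i) = 0") auto
  qed (use odd_zero i in simp)
  then show ?thesis using odd_zero by blast
qed

text \<open>Once \<open>R\<^sub>j = -2e\<close>, the lower bounds of part (i) and \<open>R\<^sub>i\<^sub>+\<^sub>1 \<ge> R\<^sub>i - 2e\<close> pin down the whole prefix.\<close>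

lemma ord_prefix_of_min_even:
  assumes j: "even j" "1 \<le> j" "j \<le> m" "ord (a j) = - 2 * ord 2"
  shows "\<And>i. even i \<Longrightarrow> 2 \<le> i \<Longrightarrow> i \<le> j \<Longrightarrow> ord (a i) = - 2 * ord 2"
    and "\<And>i. odd i \<Longrightarrow> 1 \<le> i \<Longrightarrow> i < j \<Longrightarrow> ord (a i) = 0"
proof -
  show even_i: "ord (a i) = - 2 * ord 2" if "even i" "2 \<le> i" "i \<le> j" for i
    using ord_even_mono[of i j] j that by force
  show "ord (a i) = 0" if "odd i" "1 \<le> i" "i < j" for i
  proof -
    have "i + 1 \<le> j" "even (i + 1)" using that j by presburger+
    then show ?thesis
      using even_i[of "i + 1"] ord_succ_ge[of i] ord_odd_mono[of i i] that j by simp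
  qed
qed

lemma ereal_le_add: "ereal z \<le> d \<Longrightarrow> t \<le> x + z \<Longrightarrow> ereal t \<le> ereal x + d"
  by (metis add_left_mono ereal_less_eq(3) order_trans plus_ereal.simps(1))

lemma alpha_ge_two_e:
  assumes j: "even j" "1 \<le> j" "j \<le> m" "ord (a j) = - 2 * ord 2"
    and k: "even k" "2 \<le> k" "k \<le> j" "k < m"
  shows "ereal (of_int (2 * ord 2)) \<le> alpha ord a m k"
proof -
  note prefix = ord_prefix_of_min_even[OF j]
  have Rk: "ord (a k) = - 2 * ord 2" using prefix(1) k by blast
  have odd_nonneg: "0 \<le> ord (a i)" if "odd i" "1 \<le> i" "i \<le> m" for i
    using ord_odd_mono[of i i] that by simp
  have Rk1: "0 \<le> ord (a (k + 1))" using odd_nonneg[of "k + 1"] k by simp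
  have dd: "ereal (of_int (ord (a i) - ord (a (i + 1)))) \<le> dd ord (- (a i * a (i + 1)))"
    "0 \<le> dd ord (- (a i * a (i + 1)))" if "1 \<le> i" "i + 1 \<le> m" for i
    using dd_consecutive_ge[OF that] by auto
  show ?thesis unfolding alpha_def
  proof (intro Inf_greatest, elim UnE)
    fix z assume "z \<in> {ereal (of_int (ord (a (k + 1)) - ord (a k)) / 2 + of_int (ord 2))}"
    then show "ereal (of_int (2 * ord 2)) \<le> z" using Rk Rk1 by simp
  next
    fix z assume "z \<in> {ereal (of_int (ord (a (k + 1)) - ord (a i))) + dd ord (- (a i * a (i + 1))) |i. 1 \<le> i \<and> i \<le> k}"
    then obtain i where z: "z = ereal (of_int (ord (a (k + 1)) - ord (a i))) + dd ord (- (a i * a (i + 1)))"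
      and i: "1 \<le> i" "i \<le> k" by blast
    show "ereal (of_int (2 * ord 2)) \<le> z"
    proof (cases "odd i")
      case True
      then have "i < k" using i k(1) by (cases "i = k") auto
      moreover have "even (i + 1)" using True by simp
      ultimately have "ord (a i) = 0" "ord (a (i + 1)) = - 2 * ord 2"
        using prefix(2)[of i] prefix(1)[of "i + 1"] True i k by simp_all
      then show ?thesis using z Rk1 dd[of i] ereal_le_add[of "of_int (ord (a i) - ord (a (i + 1)))"] i k
        by simp
    next
      case False
      moreover have "2 \<le> i" using False i by presburger
      ultimately have "ord (a i) = - 2 * ord 2" using prefix(1)[of i] i k by simp
      then show ?thesis using z Rk1 dd[of i] ereal_le_add[of 0] i k by (simp add: zero_ereal_def)
    qed
  next
    fix z assume "z \<in> {ereal (of_int (ord (a (i + 1)) - ord (a k))) + dd ord (- (a i * a (i + 1))) |i. k \<le> i \<and> i + 1 \<le> m}"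
    then obtain i where z: "z = ereal (of_int (ord (a (i + 1)) - ord (a k))) + dd ord (- (a i * a (i + 1)))"
      and i: "k \<le> i" "i + 1 \<le> m" by blast
    show "ereal (of_int (2 * ord 2)) \<le> z"
    proof (cases "odd i")
      case True
      then have "0 \<le> ord (a i)" using odd_nonneg[of i] i k by simp
      then show ?thesis using z Rk dd[of i] ereal_le_add[of "of_int (ord (a i) - ord (a (i + 1)))"] i k
        by simp
    next
      case False
      then have "0 \<le> ord (a (i + 1))" using odd_nonneg[of "i + 1"] i k by simp
      then show ?thesis using z Rk dd[of i] ereal_le_add[of 0] i k by (simp add: zero_ereal_def)
    qed
  qed
qed

lemma dbr_pair_ge:
  assumes j: "even j" "1 \<le> j" "j \<le> m" "ord (a j) = - 2 * ord 2" and i: "even i" "1 \<le> i" "i \<le> j"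
  shows "ord (a (i - 1)) = 0 \<and> ord (a i) = - 2 * ord 2 \<and>
    dbr ord a m (- 1) (i - 1) i \<le> dd ord (- (a (i - 1) * a i)) \<and>
    ereal (of_int (2 * ord 2)) \<le> dbr ord a m (- 1) (i - 1) i"
proof -
  note prefix = ord_prefix_of_min_even[OF j]
  have i2: "2 \<le> i" using i by presburger
  have "odd (i - 1)" using i i2 by presburger
  then have R: "ord (a (i - 1)) = 0" "ord (a i) = - 2 * ord 2"
    using prefix(2)[of "i - 1"] prefix(1)[of i] i i2 by simp_all
  have "ereal (of_int (ord (a (i - 1)) - ord (a (i - 1 + 1)))) \<le> dd ord (- (a (i - 1) * a (i - 1 + 1)))"
    using dd_consecutive_ge(1)[of "i - 1"] i2 i j by simp
  then have d1: "ereal (of_int (2 * ord 2)) \<le> dd ord (- (a (i - 1) * a i))" using R i2 by simp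
  have d2: "ereal (of_int (2 * ord 2)) \<le> alpha ord a m (i - 2)" if "2 \<le> i - 1"
  proof (rule alpha_ge_two_e[OF j])
    show "even (i - 2)" "2 \<le> i - 2" "i - 2 \<le> j" "i - 2 < m" using that i j by presburger+
  qed
  have d3: "ereal (of_int (2 * ord 2)) \<le> alpha ord a m i" if "i < m"
    using alpha_ge_two_e[OF j, of i] that i i2 by simp
  have "dbr ord a m (- 1) (i - 1) i = min (dd ord (- (a (i - 1) * a i)))
     (min (if 2 \<le> i - 1 then alpha ord a m (i - 2) else \<infinity>) (if i < m then alpha ord a m i else \<infinity>))"
    unfolding dbr_def aprod_pair[OF i(2)] by (simp add: numeral_2_eq_2)
  then show ?thesis using R d1 d2 d3 by simp
qed

lemma square_mod_four_prefix:
  assumes j: "even j" "1 \<le> j" "j \<le> m" "ord (a j) = - 2 * ord 2"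
  shows "2 * t \<le> j \<Longrightarrow> square_mod_four ((- 1) ^ t * aprod a 1 (2 * t))"
proof (induction t)
  case 0
  have "square_mod_four 1" unfolding square_mod_four_def by (rule conjI, simp, rule exI[of _ 1], simp)
  then show ?case by (simp add: aprod_def)
next
  case (Suc t)
  note prefix = ord_prefix_of_min_even[OF j]
  have "ord (a (2 * t + 1)) = 0" "ord (a (2 * t + 1 + 1)) = - 2 * ord 2"
    using prefix Suc.prems by simp_all
  then have "square_mod_four (- (a (2 * t + 1) * a (2 * t + 1 + 1)))"
    using square_mod_four_consecutive[of "2 * t + 1"] Suc.prems j by simp
  moreover have "square_mod_four ((- 1) ^ t * aprod a 1 (2 * t))" using Suc by simp
  ultimately have "square_mod_four ((- 1) ^ t * aprod a 1 (2 * t) * (- (a (2 * t + 1) * a (2 * t + 1 + 1))))"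
    using square_mod_four_mult by blast
  then show ?case using aprod_Suc_Suc[of a "2 * t"] by (simp add: mult.assoc)
qed

lemma dbr_prefix_ge:
  assumes j: "even j" "1 \<le> j" "j \<le> m" "ord (a j) = - 2 * ord 2"
  shows "ereal (of_int (2 * ord 2)) \<le> dbr ord a m ((- 1) ^ (j div 2)) 1 j"
proof -
  have "2 * (j div 2) = j" using j(1) by simp
  then have "square_mod_four ((- 1) ^ (j div 2) * aprod a 1 j)"
    using square_mod_four_prefix[OF j, of "j div 2"] by simp
  then obtain \<beta> where "(- 1) ^ (j div 2) * aprod a 1 j \<noteq> 0"
    "val_ge ord (((- 1) ^ (j div 2) * aprod a 1 j - \<beta>\<^sup>2) / ((- 1) ^ (j div 2) * aprod a 1 j)) (2 * ord 2)"
    unfolding square_mod_four_def by blast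
  then have "ereal (of_int (2 * ord 2)) \<le> dd ord ((- 1) ^ (j div 2) * aprod a 1 j)" by (rule dd_ge)
  moreover have "2 \<le> j" using j by presburger
  then have "ereal (of_int (2 * ord 2)) \<le> alpha ord a m j" if "j < m"
    by (rule alpha_ge_two_e[OF j j(1) _ order_refl that])
  ultimately show ?thesis unfolding dbr_def by simp
qed

end

locale integral_good_BONG_Delta =
  integral_good_BONG ord scale B M xs a m + dyadic_field_Delta ord \<rho> \<Delta>
  for ord :: "'a::field \<Rightarrow> int" and scale :: "'a \<Rightarrow> 'v::ab_group_add \<Rightarrow> 'v" and B M xs a m \<rho> \<Delta>
begin

lemma pair_hyp_or_delta_plane:
  assumes j: "even j" "1 \<le> j" "j \<le> m" "ord (a j) = - 2 * ord 2" and t: "2 * t + 2 \<le> j"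
  shows "gram_iso 2 (diag2 (a (2 * t + 1)) (a (2 * t + 1 + 1))) hyp_plane \<or>
    gram_iso 2 (diag2 (a (2 * t + 1)) (a (2 * t + 1 + 1))) delta_plane"
proof -
  note prefix = ord_prefix_of_min_even[OF j]
  have R: "ord (a (2 * t + 1)) = 0" "ord (a (2 * t + 1 + 1)) = - 2 * ord 2"
    using prefix(2)[of "2 * t + 1"] prefix(1)[of "2 * t + 1 + 1"] t by simp_all
  then have "square_mod_four (- (a (2 * t + 1) * a (2 * t + 1 + 1)))"
    using square_mod_four_consecutive[of "2 * t + 1"] t j by simp
  then obtain s where s: "s \<noteq> 0"
    "- (a (2 * t + 1) * a (2 * t + 1 + 1)) = s\<^sup>2 \<or> - (a (2 * t + 1) * a (2 * t + 1 + 1)) = \<Delta> * s\<^sup>2"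
    using square_class_of_square_mod_four by blast
  have nz: "a (2 * t + 1) \<noteq> 0" using a_nonzero t j by simp
  from s(2) show ?thesis
  proof
    assume "- (a (2 * t + 1) * a (2 * t + 1 + 1)) = s\<^sup>2"
    then have "gram_iso 2 (diag2 (a (2 * t + 1)) (a (2 * t + 1 + 1))) hyp_plane"
      by (rule gram_iso_diag2_hyp_plane[OF two_neq_zero nz s(1)])
    then show ?thesis ..
  next
    assume "- (a (2 * t + 1) * a (2 * t + 1 + 1)) = \<Delta> * s\<^sup>2"
    then have "gram_iso 2 (diag2 (a (2 * t + 1)) (a (2 * t + 1 + 1))) delta_plane"
      by (rule gram_iso_diag2_delta_plane[OF nz R(1) s(1)])
    then show ?thesis ..
  qed
qed

lemma prefix_hyp_or_hyp_delta:
  assumes j: "even j" "1 \<le> j" "j \<le> m" "ord (a j) = - 2 * ord 2"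
  shows "hyp_or_hyp_delta (j div 2 - 1) (diagm (\<lambda>k. a (k + 1)))"
proof (rule diag_hyp_or_hyp_delta)
  fix t assume "t \<le> j div 2 - 1"
  then have "2 * t + 2 \<le> j" using j by auto
  then show "gram_iso 2 (diag2 (a (2 * t + 1)) (a (2 * t + 1 + 1))) hyp_plane \<or>
    gram_iso 2 (diag2 (a (2 * t + 1)) (a (2 * t + 1 + 1))) delta_plane"
    by (rule pair_hyp_or_delta_plane[OF j])
qed

lemma prefix_iso_hyp:
  assumes j: "even j" "1 \<le> j" "j \<le> m" "ord (a j) = - 2 * ord 2"
  shows "gram_iso j (diagm (\<lambda>k. a (k + 1))) (hyp_gram (j div 2)) \<or>
    gram_iso j (diagm (\<lambda>k. a (k + 1))) (osum (j - 2) (hyp_gram ((j - 2) div 2)) delta_plane)"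
proof -
  define k where "k = j div 2 - 1"
  have k: "j = 2 * Suc k" unfolding k_def using j by presburger
  have "hyp_or_hyp_delta k (diagm (\<lambda>k. a (k + 1)))"
    using prefix_hyp_or_hyp_delta[OF j] unfolding k_def .
  then show ?thesis unfolding hyp_or_hyp_delta_def k by simp
qed

lemma prefix_iso_hyp_unit:
  assumes j: "even j" "1 \<le> j" "j + 1 \<le> m" "ord (a j) = - 2 * ord 2" "even (ord (a (j + 1)))"
  shows "\<exists>\<epsilon>\<in>val_units ord. (\<exists>t. t \<noteq> 0 \<and> (\<epsilon> = a (j + 1) * t\<^sup>2 \<or> \<epsilon> = \<Delta> * a (j + 1) * t\<^sup>2)) \<and>
    gram_iso (j + 1) (diagm (\<lambda>k. a (k + 1))) (osum j (hyp_gram (j div 2)) (diagm (\<lambda>k. \<epsilon>)))"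
proof -
  obtain t where t: "t \<noteq> 0" "ord t = - (ord (a (j + 1)) div 2)" using exists_ord_eq by blast
  define c where "c = a (j + 1) * t\<^sup>2"
  have "a (j + 1) \<noteq> 0" using a_nonzero j by simp
  then have "c \<noteq> 0" "ord c = ord (a (j + 1)) + 2 * ord t"
    unfolding c_def using t(1) by (simp_all add: ord_mult ord_square)
  moreover have "ord (a (j + 1)) + 2 * ord t = 0" using t(2) j(5) by simp
  ultimately have c: "c \<noteq> 0" "ord c = 0" by simp_all
  define k where "k = j div 2 - 1"
  have k: "j = 2 * Suc k" "j div 2 = Suc k" unfolding k_def using j by presburger+
  have "hyp_or_hyp_delta k (diagm (\<lambda>i. a (i + 1)))"
    using prefix_hyp_or_hyp_delta[OF j(1,2) _ j(4)] j(3) unfolding k_def by simp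
  from hyp_or_hyp_delta_osum_unit[OF this c]
  obtain \<epsilon> where \<epsilon>: "\<epsilon> = c \<or> \<epsilon> = \<Delta> / c" and
    "gram_iso (2 * Suc k + 1) (osum (2 * Suc k) (diagm (\<lambda>i. a (i + 1))) (diagm (\<lambda>i. c)))
      (osum (2 * Suc k) (hyp_gram (Suc k)) (diagm (\<lambda>i. \<epsilon>)))"
    by blast
  then have iso: "gram_iso (j + 1) (osum j (diagm (\<lambda>i. a (i + 1))) (diagm (\<lambda>i. c)))
      (osum j (hyp_gram (j div 2)) (diagm (\<lambda>i. \<epsilon>)))"
    by (simp add: k(1))
  have split: "diagm (\<lambda>i. a (i + 1)) = osum j (diagm (\<lambda>i. a (i + 1))) (diagm (\<lambda>i. a (i + j + 1)))"
    by (rule diagm_osum)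
  have "gram_iso 1 (diagm (\<lambda>i. a (i + j + 1))) (diagm (\<lambda>i. c))"
    by (rule gram_iso_unary[OF t(1)]) (simp add: diagm_def c_def power2_eq_square)
  then have "gram_iso (j + 1) (osum j (diagm (\<lambda>i. a (i + 1))) (diagm (\<lambda>i. a (i + j + 1))))
      (osum j (diagm (\<lambda>i. a (i + 1))) (diagm (\<lambda>i. c)))"
    by (rule gram_iso_osum[OF gram_iso_refl])
  then have "gram_iso (j + 1) (diagm (\<lambda>i. a (i + 1))) (osum j (hyp_gram (j div 2)) (diagm (\<lambda>i. \<epsilon>)))"
    unfolding split[symmetric] using iso by (rule gram_iso_trans)
  moreover have "\<epsilon> \<in> val_units ord" using \<epsilon> c Delta_unit by (auto simp: val_units_def ord_divide)
  moreover have "\<exists>s. s \<noteq> 0 \<and> (\<epsilon> = a (j + 1) * s\<^sup>2 \<or> \<epsilon> = \<Delta> * a (j + 1) * s\<^sup>2)"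
    using \<epsilon>
  proof
    assume "\<epsilon> = c"
    then show ?thesis using t(1) unfolding c_def by blast
  next
    assume "\<epsilon> = \<Delta> / c"
    moreover have "\<Delta> / c = \<Delta> * a (j + 1) * (t / c)\<^sup>2" "t / c \<noteq> 0"
      using c t unfolding c_def by (simp_all add: field_simps power2_eq_square)
    ultimately show ?thesis by blast
  qed
  ultimately show ?thesis by blast
qed

end

theorem proposition2p7:
  fixes ord :: "'a::field \<Rightarrow> int"
    and scale :: "'a \<Rightarrow> 'v::ab_group_add \<Rightarrow> 'v"
    and B :: "'v \<Rightarrow> 'v \<Rightarrow> 'a"
    and M :: "'v set" and xs :: "'v list"
    and a :: "nat \<Rightarrow> 'a" and m :: nat and \<Delta> :: 'a
  assumes F: "dyadic_local_field ord"
    and Delta: "\<exists>\<rho>\<in>val_units ord. \<Delta> = 1 - 4 * \<rho>" "dfrak ord \<Delta> = principal ord 4"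
    and V: "vector_space scale" "sym_bilinear scale B"
      "nondegenerate_on B (module.span scale M)"
    and lat: "is_lattice ord scale M"
    and integral: "\<forall>v\<in>M. B v v \<in> val_ring ord"
    and bong: "is_BONG ord scale B xs M" "good_BONG ord B xs" "length xs = m"
    and a_def: "\<forall>i. 1 \<le> i \<and> i \<le> m \<longrightarrow> a i = B (xs ! (i - 1)) (xs ! (i - 1))"
  shows
    "(\<forall>i j. odd i \<and> odd j \<and> 1 \<le> i \<and> i \<le> j \<and> j \<le> m \<longrightarrow> ord (a i) \<le> ord (a j) \<and> 0 \<le> ord (a i))
   \<and> (\<forall>i j. even i \<and> even j \<and> 1 \<le> i \<and> i \<le> j \<and> j \<le> m \<longrightarrow>
          ord (a i) \<le> ord (a j) \<and> - 2 * ord 2 \<le> ord (a i))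
   \<and> (\<forall>j. odd j \<and> 1 \<le> j \<and> j \<le> m \<and> ord (a j) = 0 \<longrightarrow>
          (\<forall>i. odd i \<and> 1 \<le> i \<and> i \<le> j \<longrightarrow> ord (a i) = 0) \<and>
          (\<forall>i. 1 \<le> i \<and> i \<le> j \<longrightarrow> even (ord (a i))))
   \<and> (\<forall>j. even j \<and> 1 \<le> j \<and> j \<le> m \<and> ord (a j) = - 2 * ord 2 \<longrightarrow>
          (\<forall>i. even i \<and> 1 \<le> i \<and> i \<le> j \<longrightarrow>
              ord (a (i - 1)) = 0 \<and> ord (a i) = - 2 * ord 2 \<and>
              dbr ord a m (- 1) (i - 1) i \<le> dd ord (- (a (i - 1) * a i)) \<and>
              ereal (of_int (2 * ord 2)) \<le> dbr ord a m (- 1) (i - 1) i) \<and>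
          ereal (of_int (2 * ord 2)) \<le> dbr ord a m ((- 1) ^ (j div 2)) 1 j)
   \<and> (\<forall>j. even j \<and> 1 \<le> j \<and> j \<le> m \<and> ord (a j) = - 2 * ord 2 \<longrightarrow>
          gram_iso j (diagm (\<lambda>k. a (k + 1))) (hyp_gram (j div 2)) \<or>
          gram_iso j (diagm (\<lambda>k. a (k + 1)))
             (osum (j - 2) (hyp_gram ((j - 2) div 2)) (diagm (\<lambda>k. if k = 0 then 1 else - \<Delta>))))
   \<and> (\<forall>j. even j \<and> 1 \<le> j \<and> j + 1 \<le> m \<and> ord (a j) = - 2 * ord 2 \<and> even (ord (a (j + 1))) \<longrightarrow>
          (\<exists>\<epsilon>\<in>val_units ord.
              (\<exists>t. t \<noteq> 0 \<and> (\<epsilon> = a (j + 1) * t\<^sup>2 \<or> \<epsilon> = \<Delta> * a (j + 1) * t\<^sup>2)) \<and>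
              gram_iso (j + 1) (diagm (\<lambda>k. a (k + 1)))
                 (osum j (hyp_gram (j div 2)) (diagm (\<lambda>k. \<epsilon>)))))"
proof -
  obtain \<rho> where \<rho>: "\<rho> \<in> val_units ord" "\<Delta> = 1 - 4 * \<rho>" using Delta(1) by blast
  have "add_closed M" using lat Ospan_add_closed unfolding is_lattice_def by blast
  then have "integral_good_BONG_Delta ord scale B M xs a m \<rho> \<Delta>"
    using F V(1,2) integral bong a_def \<rho> Delta(2)
    unfolding integral_good_BONG_Delta_def integral_good_BONG_def integral_good_BONG_axioms_def
      dyadic_quadratic_space_def dyadic_field_def sym_bilinear_space_def dyadic_field_Delta_def
      dyadic_field_Delta_axioms_def
    by (auto simp: val_units_def)
  then interpret integral_good_BONG_Delta ord scale B M xs a m \<rho> \<Delta> .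
  show ?thesis
    by (intro conjI)
      (use ord_odd_mono in blast, use ord_even_mono in blast, use ord_zero_prefix in blast,
        use dbr_pair_ge dbr_prefix_ge in blast, use prefix_iso_hyp in blast,
        use prefix_iso_hyp_unit in blast)
qed

end
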